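(* Let $\Gamma\in\mathfrak g^*\setminus\{0\}$ with $\mathfrak g=\mathfrak{sl}(2,F)$ and set $r=d(\Gamma)\in\mathbb R\cup\{\infty\}$. Then: (a) every $\mathcal O\in\mathrm{Nil}(\Gamma)$ meets $\Gamma+\mathfrak g^*_{x,r}$ for some $x\in\mathcal B(G)$ with $d_x(\Gamma)<r$; (b) for every $x\in\mathcal B(G)$ with $d_x(\Gamma)<r$, if a nilpotent orbit $\mathcal O$ meets $\Gamma+\mathfrak g^*_{x,r}$ then $\mathcal O\in\mathrm{Nil}(\Gamma)$; (c) for every $x\in\mathcal B(G)$, $\mathrm{Nil}(\Gamma)=\{\mathcal O({}^g\Gamma,x): g\in G,\ d_x({}^g\Gamma)<d(\Gamma)\}=\mathrm{Nil}_x(\Gamma)$.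
   Context: Let $F$ be a nonarchimedean local field of residual characteristic $p\geq3$, $G=\mathrm{SL}(2,F)$, $\mathfrak g=\mathfrak{sl}(2,F)$ identified with $\mathfrak g^*$ via the trace form; $\mathcal B(G)$ is the Bruhat–Tits tree, $\mathfrak g^*_{x,r}$ ($r\in\mathbb R$) the Moy–Prasad lattices and $\mathfrak g^*_{x,r+}=\bigcup_{s>r}\mathfrak g^*_{x,s}$. For nonzero $X\in\mathfrak g^*$, $d_x(X)$ is the unique $t$ with $X\in\mathfrak g^*_{x,t}\setminus\mathfrak g^*_{x,t+}$, $d(X)=\max_xd_x(X)$ ($=\infty$ if $X$ nilpotent). The coset $\Gamma+\mathfrak g^*_{x,d_x(\Gamma)+}$ is degenerate if it contains a nilpotent element (equivalently $d_x(\Gamma)<d(\Gamma)$), and then $\mathcal O(\Gamma,x)$ denotes the unique minimal nilpotent $G$-orbit meeting it. Nilpotent support: $\mathrm{Nil}(\Gamma)=\{\mathcal O(\Gamma,x): x\in\mathcal B(G),\ d_x(\Gamma)<d(\Gamma)\}$; local nilpotent support at $x$: $\mathrm{Nil}_x(\Gamma)=\{\mathcal O({}^g\Gamma,x): g\in G,\ d_x({}^g\Gamma)<d(\Gamma)\}$. *)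

theory Defs
  imports "HOL-Analysis.Analysis"
begin

text \<open>A valuation is a map v :: 'a => int, meaningful on nonzero elements.
  vge v a t means v(a) >= t, with the convention v(0) = +infinity.\<close>

definition vge :: "('a::field \<Rightarrow> int) \<Rightarrow> 'a \<Rightarrow> real \<Rightarrow> bool" where
  "vge v a t \<longleftrightarrow> a = 0 \<or> t \<le> real_of_int (v a)"

text \<open>F is a nonarchimedean local field (complete, discretely valued with normalized
  valuation v, finite residue field) of residual characteristic p.\<close>

definition nonarch_local_field :: "('a::field \<Rightarrow> int) \<Rightarrow> nat \<Rightarrow> bool" where
  "nonarch_local_field v p \<longleftrightarrow>
     (\<forall>x y. x \<noteq> 0 \<longrightarrow> y \<noteq> 0 \<longrightarrow> v (x * y) = v x + v y) \<and>
     (\<forall>x y. x \<noteq> 0 \<longrightarrow> y \<noteq> 0 \<longrightarrow> x + y \<noteq> 0 \<longrightarrow> min (v x) (v y) \<le> v (x + y)) \<and>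
     (\<exists>\<pi>. \<pi> \<noteq> 0 \<and> v \<pi> = 1) \<and>
     (\<forall>f :: nat \<Rightarrow> 'a.
        (\<forall>n::int. \<exists>N. \<forall>m\<ge>N. \<forall>k\<ge>N. vge v (f m - f k) (real_of_int n)) \<longrightarrow>
        (\<exists>L. \<forall>n::int. \<exists>N. \<forall>m\<ge>N. vge v (f m - L) (real_of_int n))) \<and>
     (\<exists>S. finite S \<and> (\<forall>a. vge v a 0 \<longrightarrow> (\<exists>s\<in>S. vge v (a - s) 1))) \<and>
     prime p \<and> vge v (of_nat p) 1"

type_synonym 'a mat2 = "'a^2^2"

definition SL2 :: "'a::field mat2 set" where
  "SL2 = {g. det g = 1}"

definition sl2 :: "'a::field mat2 set" where
  "sl2 = {X. trace X = 0}"

definition Ad :: "'a::field mat2 \<Rightarrow> 'a mat2 \<Rightarrow> 'a mat2" where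
  "Ad g X = g ** X ** matrix_inv g"

definition nilpotent_mat :: "'a::field mat2 \<Rightarrow> bool" where
  "nilpotent_mat X \<longleftrightarrow> (\<exists>n. (((**) X) ^^ n) (mat 1) = 0)"

definition orbit :: "'a::field mat2 \<Rightarrow> 'a mat2 set" where
  "orbit X = {Ad g X | g. g \<in> SL2}"

definition nil_orbit :: "'a::field mat2 set \<Rightarrow> bool" where
  "nil_orbit Ob \<longleftrightarrow> (\<exists>N\<in>sl2. nilpotent_mat N \<and> Ob = orbit N)"

definition vclosure :: "('a::field \<Rightarrow> int) \<Rightarrow> 'a mat2 set \<Rightarrow> 'a mat2 set" where
  "vclosure v S = {X. \<forall>n::int. \<exists>Y\<in>S. \<forall>i j. vge v ((X - Y) $ i $ j) (real_of_int n)}"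

definition orbit_le :: "('a::field \<Rightarrow> int) \<Rightarrow> 'a mat2 set \<Rightarrow> 'a mat2 set \<Rightarrow> bool" where
  "orbit_le v Ob Ob' \<longleftrightarrow> Ob \<subseteq> vclosure v Ob'"

text \<open>B(G) = G \<times> A / ~, where A = R is the standard apartment (diagonal torus).
  A point is represented by a pair (h, s) with h in SL2 and s in R; the
  representative of a point is irrelevant for the lattices below.
  At s in A the affine roots are \<alpha> + n with \<alpha>(s) = s, so
  g_{s,t} = {[[a,b],[c,-a]] : v(a) \<ge> t, v(b) \<ge> t - s, v(c) \<ge> t + s}.\<close>

definition BT :: "('a::field mat2 \<times> real) set" where
  "BT = {(h, s). h \<in> SL2}"

definition MP_std :: "('a::field \<Rightarrow> int) \<Rightarrow> real \<Rightarrow> real \<Rightarrow> 'a mat2 set" where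
  "MP_std v s t = {Y \<in> sl2. vge v (Y $ 1 $ 1) t \<and> vge v (Y $ 1 $ 2) (t - s)
                              \<and> vge v (Y $ 2 $ 1) (t + s)}"

definition MP :: "('a::field \<Rightarrow> int) \<Rightarrow> 'a mat2 \<times> real \<Rightarrow> real \<Rightarrow> 'a mat2 set" where
  "MP v x t = Ad (fst x) ` MP_std v (snd x) t"

definition MP_plus :: "('a::field \<Rightarrow> int) \<Rightarrow> 'a mat2 \<times> real \<Rightarrow> real \<Rightarrow> 'a mat2 set" where
  "MP_plus v x t = (\<Union>u\<in>{u. t < u}. MP v x u)"

text \<open>Dual lattices g*_{x,r}, with g* identified with g via the trace form.\<close>

definition MPd :: "('a::field \<Rightarrow> int) \<Rightarrow> 'a mat2 \<times> real \<Rightarrow> real \<Rightarrow> 'a mat2 set" where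
  "MPd v x r = {X \<in> sl2. \<forall>Y \<in> MP_plus v x (- r). vge v (trace (X ** Y)) 1}"

definition MPd_plus :: "('a::field \<Rightarrow> int) \<Rightarrow> 'a mat2 \<times> real \<Rightarrow> real \<Rightarrow> 'a mat2 set" where
  "MPd_plus v x r = (\<Union>u\<in>{u. r < u}. MPd v x u)"

text \<open>g*_{x,r} for extended real r: intersection of g*_{x,t} over real t \<le> r
  (equals g*_{x,r} for real r, and the intersection of all lattices for r = \<infinity>).\<close>

definition MPdE :: "('a::field \<Rightarrow> int) \<Rightarrow> 'a mat2 \<times> real \<Rightarrow> ereal \<Rightarrow> 'a mat2 set" where
  "MPdE v x r = {X. \<forall>t. ereal t \<le> r \<longrightarrow> X \<in> MPd v x t}"

definition depth_at :: "('a::field \<Rightarrow> int) \<Rightarrow> 'a mat2 \<times> real \<Rightarrow> 'a mat2 \<Rightarrow> real" where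
  "depth_at v x X = (THE t. X \<in> MPd v x t \<and> X \<notin> MPd_plus v x t)"

definition depth :: "('a::field \<Rightarrow> int) \<Rightarrow> 'a mat2 \<Rightarrow> ereal" where
  "depth v X = (SUP x\<in>BT. ereal (depth_at v x X))"

definition coset :: "'a::field mat2 \<Rightarrow> 'a mat2 set \<Rightarrow> 'a mat2 set" where
  "coset \<Gamma> L = (\<lambda>Y. \<Gamma> + Y) ` L"

definition meets_deg :: "('a::field \<Rightarrow> int) \<Rightarrow> 'a mat2 \<Rightarrow> 'a mat2 \<times> real \<Rightarrow> 'a mat2 set \<Rightarrow> bool" where
  "meets_deg v \<Gamma> x Ob \<longleftrightarrow> nil_orbit Ob \<and> Ob \<inter> coset \<Gamma> (MPd_plus v x (depth_at v x \<Gamma>)) \<noteq> {}"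

definition minorb :: "('a::field \<Rightarrow> int) \<Rightarrow> 'a mat2 \<Rightarrow> 'a mat2 \<times> real \<Rightarrow> 'a mat2 set" where
  "minorb v \<Gamma> x = (THE Ob. meets_deg v \<Gamma> x Ob \<and>
                      (\<forall>Ob'. meets_deg v \<Gamma> x Ob' \<longrightarrow> orbit_le v Ob' Ob \<longrightarrow> Ob' = Ob))"

definition Nil_supp :: "('a::field \<Rightarrow> int) \<Rightarrow> 'a mat2 \<Rightarrow> 'a mat2 set set" where
  "Nil_supp v \<Gamma> = {minorb v \<Gamma> x | x. x \<in> BT \<and> ereal (depth_at v x \<Gamma>) < depth v \<Gamma>}"

definition Nil_at :: "('a::field \<Rightarrow> int) \<Rightarrow> 'a mat2 \<Rightarrow> 'a mat2 \<times> real \<Rightarrow> 'a mat2 set set" where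
  "Nil_at v \<Gamma> x = {minorb v (Ad g \<Gamma>) x | g. g \<in> SL2 \<and>
                      ereal (depth_at v x (Ad g \<Gamma>)) < depth v \<Gamma>}"

end

theory Submission
  imports Defs
begin

text \<open>
  At a point \<open>x = (h, s)\<close> of the tree, conjugating by \<open>h\<^sup>-\<^sup>1\<close> turns the filtration at \<open>x\<close> into the
  standard one at \<open>s\<close>, where \<open>\<Gamma>\<close> becomes \<open>[[a, b], [c, -a]]\<close> and \<open>d_x(\<Gamma>)\<close> is the least of
  \<open>v(a)\<close>, \<open>v(b) + s\<close> and \<open>v(c) - s\<close>. Since \<open>2 d(\<Gamma>) \<le> v(det \<Gamma>)\<close>, the coset
  \<open>\<Gamma> + g*_{x,d_x(\<Gamma>)+}\<close> is degenerate only if this minimum is attained off the diagonal, say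
  at \<open>b\<close> (the Weyl element exchanges \<open>b\<close> and \<open>c\<close>). Then \<open>[[a, b], [-a\<^sup>2/b, -a]]\<close> is a nilpotent
  element of \<open>\<Gamma> + g*_{x,d(\<Gamma>)}\<close>, and since every principal unit is a square (Hensel's lemma;
  2 is a unit) every nilpotent element of \<open>\<Gamma> + g*_{x,d_x(\<Gamma>)+}\<close> is conjugate to \<open>[[0, b], [0, 0]]\<close>:
  exactly one nilpotent orbit meets a degenerate coset, which gives (a) and (b). Lowering \<open>s\<close>
  keeps \<open>b\<close> leading and the orbit unchanged, and right translation by the torus shifts \<open>s\<close> by
  even integers, so the orbit is attained at every height; up to conjugating \<open>\<Gamma>\<close> this gives (c).
\<close>

section \<open>Two-by-two matrices, SL(2) and the adjoint action\<close>

definition M2 :: "'a \<Rightarrow> 'a \<Rightarrow> 'a \<Rightarrow> 'a \<Rightarrow> 'a::field mat2" where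
  "M2 a b c d = (\<chi> i j. if i = 1 then (if j = 1 then a else b) else (if j = 1 then c else d))"

lemma M2_nth [simp]:
  "M2 a b c d $ 1 $ 1 = a" "M2 a b c d $ 1 $ 2 = b" "M2 a b c d $ 2 $ 1 = c" "M2 a b c d $ 2 $ 2 = d"
  by (simp_all add: M2_def)

lemma M2_eta: "(X::'a::field mat2) = M2 (X$1$1) (X$1$2) (X$2$1) (X$2$2)"
  unfolding M2_def vec_eq_iff forall_2 by simp

lemma M2_eq_iff: "M2 a b c d = M2 a' b' c' d' \<longleftrightarrow> a = a' \<and> b = b' \<and> c = c' \<and> d = d'"
  by (metis M2_nth)

lemma M2_mult:
  "M2 a b c d ** M2 a' b' c' d' = M2 (a*a'+b*c') (a*b'+b*d') (c*a'+d*c') (c*b'+d*d')"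
  by (subst M2_eta) (simp add: matrix_matrix_mult_def sum_2)

lemma M2_diff: "M2 a b c d - M2 a' b' c' d' = M2 (a-a') (b-b') (c-c') (d-d')"
  by (subst M2_eta) simp

lemma M2_zero: "(0::'a::field mat2) = M2 0 0 0 0"
  by (subst M2_eta) simp

lemma M2_one: "(mat 1::'a::field mat2) = M2 1 0 0 1"
  by (subst M2_eta) (simp add: mat_def)

lemma M2_det: "det (M2 a b c d) = a*d - b*c"
  by (simp add: det_2)

lemma M2_trace: "trace (M2 a b c d) = a + d"
  by (simp add: trace_def sum_2)

lemma sl2_iff: "X \<in> sl2 \<longleftrightarrow> X$2$2 = - X$1$1"
  by (simp add: sl2_def trace_def sum_2 eq_neg_iff_add_eq_0 add.commute)

lemma sl2_M2_eta: "Y \<in> sl2 \<Longrightarrow> Y = M2 (Y$1$1) (Y$1$2) (Y$2$1) (- Y$1$1)"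
  using M2_eta[of Y] by (simp add: sl2_iff)

lemma M2_in_sl2 [simp]: "M2 a b c (- a) \<in> sl2"
  by (simp add: sl2_iff)

lemma matrix_inv_unique:
  fixes A B :: "'a::field mat2"
  assumes "A ** B = mat 1" "B ** A = mat 1"
  shows "matrix_inv A = B"
proof -
  have "\<exists>A'. A ** A' = mat 1 \<and> A' ** A = mat 1" using assms by blast
  then have inv: "matrix_inv A ** A = mat 1"
    unfolding matrix_inv_def by (rule someI2_ex) blast
  have "matrix_inv A = matrix_inv A ** (A ** B)" using assms by (simp add: matrix_mul_rid)
  also have "\<dots> = B" using inv by (simp add: matrix_mul_assoc matrix_mul_lid)
  finally show ?thesis .
qed

lemma SL2_iff: "g \<in> SL2 \<longleftrightarrow> g$1$1 * g$2$2 - g$1$2 * g$2$1 = 1"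
  by (simp add: SL2_def det_2)

lemma M2_in_SL2_iff: "M2 a b c d \<in> SL2 \<longleftrightarrow> a*d - b*c = 1"
  by (simp add: SL2_iff)

lemma matrix_inv_M2: "a*d - b*c = (1::'a::field) \<Longrightarrow> matrix_inv (M2 a b c d) = M2 d (-b) (-c) a"
  by (rule matrix_inv_unique) (simp_all add: M2_mult M2_one algebra_simps)

lemma matrix_inv_SL2: "g \<in> SL2 \<Longrightarrow> matrix_inv g = M2 (g$2$2) (-g$1$2) (-g$2$1) (g$1$1)"
  using matrix_inv_M2[of "g$1$1" "g$2$2" "g$1$2" "g$2$1"] M2_eta[of g] by (simp add: SL2_iff)

lemma SL2_inverse_mult:
  assumes "g \<in> SL2"
  shows "matrix_inv g ** g = mat 1" "g ** matrix_inv g = mat 1"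
  using assms
  by (subst (1 2) M2_eta[of g], simp add: matrix_inv_SL2 M2_mult M2_one SL2_iff algebra_simps)+

lemma SL2_mult: "g \<in> SL2 \<Longrightarrow> k \<in> SL2 \<Longrightarrow> g ** k \<in> SL2"
  by (simp add: SL2_def det_mul)

lemma SL2_matrix_inv: "g \<in> SL2 \<Longrightarrow> matrix_inv g \<in> SL2"
  by (simp add: matrix_inv_SL2 SL2_iff) (simp add: algebra_simps)

lemma SL2_one: "mat 1 \<in> SL2"
  by (simp add: SL2_def)

lemma matrix_inv_mult_SL2:
  assumes "g \<in> SL2" "k \<in> SL2"
  shows "matrix_inv (g ** k) = matrix_inv k ** matrix_inv g"
proof (rule matrix_inv_unique)
  have "g ** k ** (matrix_inv k ** matrix_inv g) = g ** (k ** matrix_inv k) ** matrix_inv g"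
    "matrix_inv k ** matrix_inv g ** (g ** k) = matrix_inv k ** (matrix_inv g ** g) ** k"
    by (simp_all add: matrix_mul_assoc)
  then show "g ** k ** (matrix_inv k ** matrix_inv g) = mat 1"
    "matrix_inv k ** matrix_inv g ** (g ** k) = mat 1"
    using SL2_inverse_mult[OF assms(1)] SL2_inverse_mult[OF assms(2)] by (simp_all add: matrix_mul_rid)
qed

lemma Ad_Ad: "g \<in> SL2 \<Longrightarrow> k \<in> SL2 \<Longrightarrow> Ad g (Ad k X) = Ad (g ** k) X"
  by (simp add: Ad_def matrix_inv_mult_SL2 matrix_mul_assoc)

lemma Ad_one: "Ad (mat 1) X = X"
  using matrix_inv_unique[of "mat 1 :: 'a::field mat2" "mat 1"]
  by (simp add: Ad_def matrix_mul_lid matrix_mul_rid)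

lemma Ad_inv_Ad: "g \<in> SL2 \<Longrightarrow> Ad (matrix_inv g) (Ad g X) = X"
  by (simp add: Ad_Ad SL2_matrix_inv SL2_inverse_mult Ad_one)

lemma Ad_Ad_inv: "g \<in> SL2 \<Longrightarrow> Ad g (Ad (matrix_inv g) X) = X"
  by (simp add: Ad_Ad SL2_matrix_inv SL2_inverse_mult Ad_one)

lemma Ad_image_iff: "h \<in> SL2 \<Longrightarrow> X \<in> Ad h ` S \<longleftrightarrow> Ad (matrix_inv h) X \<in> S"
proof
  assume "h \<in> SL2" "X \<in> Ad h ` S"
  then show "Ad (matrix_inv h) X \<in> S" using Ad_inv_Ad by force
next
  assume h: "h \<in> SL2" "Ad (matrix_inv h) X \<in> S"
  then have "Ad h (Ad (matrix_inv h) X) \<in> Ad h ` S" by blast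
  then show "X \<in> Ad h ` S" using Ad_Ad_inv[OF h(1)] by simp
qed

lemma Ad_add: "Ad g (X + Y) = Ad g X + Ad g Y"
  by (simp add: Ad_def matrix_matrix_mult_def vec_eq_iff sum.distrib algebra_simps)

lemma Ad_diff: "Ad g (X - Y) = Ad g X - Ad g Y"
  by (simp add: Ad_def matrix_matrix_mult_def vec_eq_iff sum_subtractf algebra_simps)

lemma Ad_zero: "Ad g 0 = 0"
  by (simp add: Ad_def)

lemma det_Ad: "g \<in> SL2 \<Longrightarrow> det (Ad g X) = det X"
  using SL2_matrix_inv[of g] by (simp add: Ad_def det_mul SL2_def)

lemma trace_Ad: "g \<in> SL2 \<Longrightarrow> trace (Ad g X) = trace X"
  using trace_mul_sym[of "g ** X" "matrix_inv g"] SL2_inverse_mult[of g]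
  by (simp add: Ad_def matrix_mul_assoc matrix_mul_lid)

lemma trace_Ad_mult: "g \<in> SL2 \<Longrightarrow> trace (Ad g X ** Ad g Y) = trace (X ** Y)"
proof -
  assume g: "g \<in> SL2"
  have "Ad g X ** Ad g Y = g ** (X ** ((matrix_inv g ** g) ** (Y ** matrix_inv g)))"
    by (simp add: Ad_def matrix_mul_assoc)
  also have "\<dots> = Ad g (X ** Y)"
    using SL2_inverse_mult[OF g] by (simp add: Ad_def matrix_mul_assoc matrix_mul_lid)
  finally show ?thesis using trace_Ad[OF g] by simp
qed

lemma sl2_Ad_iff: "g \<in> SL2 \<Longrightarrow> Ad g X \<in> sl2 \<longleftrightarrow> X \<in> sl2"
  by (simp add: sl2_def trace_Ad)

lemma Ad_M2:
  "p*t - q*r = 1 \<Longrightarrow> Ad (M2 p q r t) X = M2 p q r t ** X ** M2 t (-q) (-r) p"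
  by (simp add: Ad_def matrix_inv_M2)

section \<open>Discretely valued fields\<close>

definition vgt :: "('a::field \<Rightarrow> int) \<Rightarrow> 'a \<Rightarrow> real \<Rightarrow> bool" where
  "vgt v a t \<longleftrightarrow> a = 0 \<or> t < real_of_int (v a)"

locale valued_field =
  fixes v :: "'a::field \<Rightarrow> int"
  assumes v_mult: "x \<noteq> 0 \<Longrightarrow> y \<noteq> 0 \<Longrightarrow> v (x * y) = v x + v y"
    and v_ultrametric: "x \<noteq> 0 \<Longrightarrow> y \<noteq> 0 \<Longrightarrow> x + y \<noteq> 0 \<Longrightarrow> min (v x) (v y) \<le> v (x + y)"
    and uniformizer_exists: "\<exists>\<pi>. \<pi> \<noteq> 0 \<and> v \<pi> = 1"
    and v_complete: "\<And>f :: nat \<Rightarrow> 'a.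
        (\<forall>n::int. \<exists>N. \<forall>m\<ge>N. \<forall>k\<ge>N. vge v (f m - f k) (real_of_int n)) \<Longrightarrow>
        (\<exists>L. \<forall>n::int. \<exists>N. \<forall>m\<ge>N. vge v (f m - L) (real_of_int n))"
begin

lemma v_one: "v 1 = 0"
  using v_mult[of 1 1] by simp

lemma v_uminus: "v (- x) = v x"
proof (cases "x = 0")
  case False
  have "v ((-x)*(-x)) = v (x * x)" by simp
  then show ?thesis using v_mult[of "-x" "-x"] v_mult[of x x] False by simp
qed simp

lemma v_inverse: "x \<noteq> 0 \<Longrightarrow> v (inverse x) = - v x"
  using v_mult[of x "inverse x"] v_one by simp

lemma v_divide: "x \<noteq> 0 \<Longrightarrow> y \<noteq> 0 \<Longrightarrow> v (x / y) = v x - v y"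
  by (simp add: divide_inverse v_mult v_inverse)

lemma vge_zero [simp]: "vge v 0 t"
  by (simp add: vge_def)

lemma vge_mono: "vge v a t \<Longrightarrow> t' \<le> t \<Longrightarrow> vge v a t'"
  by (auto simp: vge_def)

lemma vge_uminus [simp]: "vge v (- a) t \<longleftrightarrow> vge v a t"
  by (simp add: vge_def v_uminus)

lemma vge_add: "vge v a t \<Longrightarrow> vge v b t \<Longrightarrow> vge v (a + b) t"
  unfolding vge_def
proof (elim disjE)
  assume "t \<le> real_of_int (v a)" "t \<le> real_of_int (v b)"
  then show "a + b = 0 \<or> t \<le> real_of_int (v (a + b))"
    using v_ultrametric[of a b] by (cases "a = 0"; cases "b = 0"; cases "a + b = 0") force+
qed auto

lemma vge_diff: "vge v a t \<Longrightarrow> vge v b t \<Longrightarrow> vge v (a - b) t"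
  using vge_add[of a t "-b"] by simp

lemma vge_mult: "vge v a t \<Longrightarrow> vge v b u \<Longrightarrow> vge v (a * b) (t + u)"
  by (cases "a = 0"; cases "b = 0") (auto simp: vge_def v_mult)

lemma vge_all_imp_zero: assumes "\<And>n::int. vge v a (real_of_int n)" shows "a = 0"
  using assms[of "v a + 1"] by (auto simp: vge_def)

lemma vge_one [simp]: "vge v 1 0"
  by (simp add: vge_def v_one)

lemma vge_of_nat: "vge v (of_nat n) 0"
  by (induction n) (simp_all add: vge_add)

lemma two_unit_if_odd_nonunit:
  assumes "odd p" "vge v (of_nat p) 1"
  shows "(2::'a) \<noteq> 0" "v 2 = 0"
proof -
  obtain k where p: "p = 2 * k + 1" using assms(1) oddE by blast
  have "\<not> vge v (2::'a) 1"
  proof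
    assume "vge v (2::'a) 1"
    then have "vge v (2 * of_nat k :: 'a) 1" using vge_mult[OF _ vge_of_nat] by fastforce
    with assms(2) have "vge v (of_nat p - 2 * of_nat k :: 'a) 1" by (rule vge_diff)
    then show False by (simp add: p vge_def v_one)
  qed
  then show "(2::'a) \<noteq> 0" "v 2 = 0" using vge_of_nat[of 2] by (auto simp: vge_def)
qed

lemma v_add_strict:
  assumes "x \<noteq> 0" "y = 0 \<or> v x < v y"
  shows "x + y \<noteq> 0 \<and> v (x + y) = v x"
proof (cases "y = 0")
  case False
  with assms have lt: "v x < v y" by simp
  have ne: "x + y \<noteq> 0"
  proof
    assume "x + y = 0"
    then have "y = - x" by (simp add: add_eq_0_iff2)
    with lt show False by (simp add: v_uminus)
  qed
  have "v x \<le> v (x + y)" using v_ultrametric[OF assms(1) False ne] lt by simp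
  moreover have "min (v (x + y)) (v (- y)) \<le> v x"
    using v_ultrametric[OF ne, of "- y"] False assms(1) by simp
  ultimately show ?thesis using lt ne by (simp add: v_uminus)
qed (simp add: assms)

definition unif where "unif = (SOME \<pi>. \<pi> \<noteq> 0 \<and> v \<pi> = 1)"

lemma unif_nonzero: "unif \<noteq> 0" and v_unif: "v unif = 1"
  using someI_ex[OF uniformizer_exists] by (simp_all add: unif_def)

lemma unif_power: "unif ^ n \<noteq> 0 \<and> v (unif ^ n) = int n"
  by (induction n) (simp_all add: v_one unif_nonzero v_unif v_mult)

lemma unif_powi: "unif powi k \<noteq> 0 \<and> v (unif powi k) = k"
proof (cases "k \<ge> 0")
  case True
  then show ?thesis using unif_power[of "nat k"] by (simp add: power_int_def)
next
  case False
  then show ?thesis using unif_power[of "nat (-k)"] by (simp add: power_int_def v_inverse power_inverse)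
qed

lemma vge_of_unif_powi_pairing:
  assumes "\<And>k::int. t < real_of_int k \<Longrightarrow> vge v (x * unif powi k) 1"
  shows "vge v x (- t)"
proof -
  define k where "k = \<lfloor>t\<rfloor> + 1"
  have "vge v (x * unif powi k) 1" by (rule assms) (simp add: k_def)
  then have "vge v x (1 - real_of_int k)"
    using unif_powi[of k] by (cases "x = 0") (auto simp: vge_def v_mult)
  then show ?thesis by (rule vge_mono) (simp add: k_def)
qed

lemma vgt_iff_vge_floor: "vgt v a t \<longleftrightarrow> vge v a (real_of_int (\<lfloor>t\<rfloor> + 1))"
proof -
  have h: "t < real_of_int m \<longleftrightarrow> real_of_int (\<lfloor>t\<rfloor> + 1) \<le> real_of_int m" for m :: int
    by (simp only: of_int_le_iff floor_less_iff[symmetric]) linarith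
  show ?thesis unfolding vgt_def vge_def using h by blast
qed

lemma vge_imp_vgt: "vge v a t \<Longrightarrow> t' < t \<Longrightarrow> vgt v a t'"
  by (auto simp: vgt_def vge_def)

lemma vgt_imp_vge: "vgt v a t \<Longrightarrow> vge v a t"
  by (auto simp: vgt_def vge_def)

lemma vgt_add: "vgt v a t \<Longrightarrow> vgt v b t \<Longrightarrow> vgt v (a + b) t"
  unfolding vgt_iff_vge_floor by (rule vge_add)

lemma vge_vgt_mult: "vge v a t \<Longrightarrow> vgt v b u \<Longrightarrow> vgt v (a * b) (t + u)"
  by (cases "a = 0"; cases "b = 0") (auto simp: vge_def vgt_def v_mult)

lemma vgt_zero_imp_vge_one: "vgt v a 0 \<Longrightarrow> vge v a 1"
  by (auto simp: vgt_def vge_def)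

lemma vgt_zero [simp]: "vgt v 0 t"
  by (simp add: vgt_def)

lemma vgt_mult: "vgt v a t \<Longrightarrow> vgt v b u \<Longrightarrow> vgt v (a * b) (t + u)"
  using vge_vgt_mult[OF vgt_imp_vge] by blast

lemma vge_telescope:
  assumes step: "\<And>n. vge v (f (Suc n) - f n) (real n)" and "k \<le> m"
  shows "vge v (f m - f k) (real k)"
  using \<open>k \<le> m\<close>
proof (induction m rule: dec_induct)
  case (step m)
  have "vge v (f (Suc m) - f m) (real k)" using assms(1)[of m] by (rule vge_mono) (use step.hyps(1) in simp)
  from vge_add[OF this step.IH] show ?case by simp
qed simp

lemma fast_steps_converge:
  assumes step: "\<And>n. vge v (f (Suc n) - f n) (real n)"
  shows "\<exists>L. \<forall>n. vge v (f n - L) (real n)"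
proof -
  have close: "vge v (f m - f k) (real (min m k))" for m k
  proof (cases "k \<le> m")
    case True
    then show ?thesis using vge_telescope[OF step True] by (simp add: min_absorb2)
  next
    case False
    then have "vge v (f k - f m) (real m)" by (intro vge_telescope[OF step]) simp
    then show ?thesis using False by (metis minus_diff_eq vge_uminus min_absorb1 nle_le)
  qed
  have "\<exists>N. \<forall>m\<ge>N. \<forall>k\<ge>N. vge v (f m - f k) (real_of_int n)" for n :: int
  proof (intro exI allI impI)
    fix m k assume mk: "nat n \<le> m" "nat n \<le> k"
    have "real_of_int n \<le> real (min m k)" using mk by linarith
    with close show "vge v (f m - f k) (real_of_int n)" by (rule vge_mono)
  qed
  then obtain L where L: "\<And>n::int. \<exists>N. \<forall>m\<ge>N. vge v (f m - L) (real_of_int n)"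
    using v_complete by blast
  have "vge v (f n - L) (real n)" for n
  proof -
    obtain N where N: "\<And>m. m \<ge> N \<Longrightarrow> vge v (f m - L) (real n)"
      using L[of "int n"] by auto
    define m where "m = max N n"
    have "vge v (f n - f m) (real n)" using close[of n m] by (simp add: m_def)
    from vge_add[OF this N[of m]] show ?thesis by (simp add: m_def)
  qed
  then show ?thesis by blast
qed

end

locale odd_residual_valued_field = valued_field +
  assumes two_neq_zero: "(2::'a) \<noteq> 0" and v_two: "v 2 = 0"
begin

lemma vge_two [simp]: "vge v 2 0"
  by (simp add: vge_def v_two)

lemma vge_divide_two [simp]: "vge v (a / 2) t \<longleftrightarrow> vge v a t"
  by (cases "a = 0") (simp_all add: vge_def v_divide two_neq_zero v_two)

lemma sqrt_newton_step:
  assumes w: "vge v (w - 1) 1" and err: "vge v (u - w * w) t" and t: "1 \<le> t"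
  defines "w' \<equiv> w + (u - w * w) / 2"
  shows "vge v (w' - 1) 1" "vge v (u - w' * w') (t + 1)" "vge v (w' - w) t"
proof -
  define e where "e = u - w * w"
  have e: "vge v e t" using err by (simp add: e_def)
  show "vge v (w' - w) t" using e by (simp add: w'_def e_def)
  have "w' - 1 = (w - 1) + e / 2" by (simp add: w'_def e_def)
  moreover have "vge v (e / 2) 1" using vge_mono[OF e t] by (simp add: e_def)
  ultimately show "vge v (w' - 1) 1" using vge_add[OF w] by metis
  have "(4::'a) \<noteq> 0" using two_neq_zero by (metis mult_2_right numeral_Bit0 mult_eq_0_iff one_add_one)
  then have "u - w' * w' = e * (- (w - 1)) + (- (e * e / 2 / 2))"
    using two_neq_zero unfolding w'_def e_def by (simp add: field_simps)
  moreover have "vge v (e * (- (w - 1))) (t + 1)" using vge_mult[OF e, of "- (w - 1)" 1] w by (simp only: vge_uminus e_def)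
  moreover have "vge v (e * e / 2 / 2) (t + 1)"
    unfolding vge_divide_two using vge_mult[OF e e] by (rule vge_mono) (use t in simp)
  ultimately show "vge v (u - w' * w') (t + 1)" by (metis vge_add vge_uminus)
qed

lemma principal_unit_is_square:
  assumes u: "vge v (u - 1) 1"
  shows "\<exists>w. w \<noteq> 0 \<and> w * w = u"
proof -
  define w :: "nat \<Rightarrow> 'a" where "w = rec_nat 1 (\<lambda>n x. x + (u - x*x)/2)"
  have wS: "w (Suc n) = w n + (u - w n * w n)/2" for n by (simp add: w_def)
  have inv: "vge v (w n - 1) 1 \<and> vge v (u - w n * w n) (real n + 1)" for n
  proof (induction n)
    case 0 then show ?case using u by (simp add: w_def)
  next
    case (Suc n) then show ?case using sqrt_newton_step[of "w n" u "real n + 1"] by (simp add: wS)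
  qed
  have "vge v (w (Suc n) - w n) (real n)" for n
    using vge_mono[OF conjunct2[OF inv[of n]], of "real n"] by (simp add: wS)
  from fast_steps_converge[OF this] obtain L where L: "\<And>n. vge v (w n - L) (real n)" by blast
  have "L * L - u = 0"
  proof (rule vge_all_imp_zero)
    fix n :: int
    define m where "m = nat n"
    have wm: "vge v (L - w m) (real m)" using L[of m] by (metis minus_diff_eq vge_uminus)
    have "vge v (L + w m) 0"
    proof -
      have "vge v (L - w m) 0" using wm by (rule vge_mono) simp
      moreover have "vge v (2 * (w m - 1)) 0"
        using vge_mult[OF vge_two conjunct1[OF inv[of m]]] by (rule vge_mono) simp
      ultimately have "vge v ((L - w m) + 2 * (w m - 1) + 2) 0" by (intro vge_add) simp_all
      then show ?thesis by (simp add: add.commute)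
    qed
    then have "vge v ((L - w m) * (L + w m)) (real m)" using vge_mult[OF wm] by fastforce
    moreover have "vge v (u - w m * w m) (real m)" using conjunct2[OF inv[of m]] by (rule vge_mono) simp
    moreover have "L * L - u = (L - w m) * (L + w m) + (- (u - w m * w m))" by (simp add: algebra_simps)
    ultimately have "vge v (L * L - u) (real m)" by (metis vge_add vge_uminus)
    then show "vge v (L * L - u) (real_of_int n)" by (rule vge_mono) (simp add: m_def)
  qed
  moreover have "u \<noteq> 0" using u by (auto simp: vge_def v_uminus v_one)
  ultimately show ?thesis by (intro exI[of _ L]) auto
qed

end

section \<open>Moy--Prasad lattices at the standard apartment\<close>

definition MP_std_plus :: "('a::field \<Rightarrow> int) \<Rightarrow> real \<Rightarrow> real \<Rightarrow> 'a mat2 set" where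
  "MP_std_plus v s t = {Y \<in> sl2. vgt v (Y $ 1 $ 1) t \<and> vgt v (Y $ 1 $ 2) (t - s)
                              \<and> vgt v (Y $ 2 $ 1) (t + s)}"

definition std_depth :: "('a::field \<Rightarrow> int) \<Rightarrow> real \<Rightarrow> 'a mat2 \<Rightarrow> real \<Rightarrow> bool" where
  "std_depth v s Y t \<longleftrightarrow> Y \<in> MP_std v s t \<and> Y \<notin> MP_std_plus v s t"

context odd_residual_valued_field
begin

lemma UN_MP_std_eq_MP_std_plus: "(\<Union>u\<in>{u. t < u}. MP_std v s u) = MP_std_plus v s t"
proof
  show "(\<Union>u\<in>{u. t < u}. MP_std v s u) \<subseteq> MP_std_plus v s t"
    by (auto simp: MP_std_def MP_std_plus_def intro: vge_imp_vgt)
next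
  show "MP_std_plus v s t \<subseteq> (\<Union>u\<in>{u. t < u}. MP_std v s u)"
  proof
    fix Y assume Y: "Y \<in> MP_std_plus v s t"
    define ua where "ua = (if Y$1$1 = 0 then t + 1 else real_of_int (v (Y$1$1)))"
    define ub where "ub = (if Y$1$2 = 0 then t + 1 else real_of_int (v (Y$1$2)) + s)"
    define uc where "uc = (if Y$2$1 = 0 then t + 1 else real_of_int (v (Y$2$1)) - s)"
    define u where "u = min ua (min ub uc)"
    have "t < u" using Y by (auto simp: MP_std_plus_def vgt_def u_def ua_def ub_def uc_def)
    moreover have "Y \<in> MP_std v s u" using Y
      by (auto simp: MP_std_plus_def MP_std_def vge_def u_def ua_def ub_def uc_def)
    ultimately show "Y \<in> (\<Union>u\<in>{u. t < u}. MP_std v s u)" by blast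
  qed
qed

lemma MP_std_M2: "M2 a b c (-a) \<in> MP_std v s t \<longleftrightarrow> vge v a t \<and> vge v b (t - s) \<and> vge v c (t + s)"
  by (simp add: MP_std_def)

lemma MP_std_plus_M2:
  "M2 a b c (-a) \<in> MP_std_plus v s t \<longleftrightarrow> vgt v a t \<and> vgt v b (t - s) \<and> vgt v c (t + s)"
  by (simp add: MP_std_plus_def)

lemma MP_std_M2_offdiag: "M2 0 b c 0 \<in> MP_std v s t \<longleftrightarrow> vge v b (t - s) \<and> vge v c (t + s)"
  by (simp add: MP_std_def sl2_iff)

lemma MP_std_plus_M2_offdiag: "M2 0 b c 0 \<in> MP_std_plus v s t \<longleftrightarrow> vgt v b (t - s) \<and> vgt v c (t + s)"
  by (simp add: MP_std_plus_def sl2_iff)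

lemma trace_M2_mult_sl2: "trace (M2 a b c (-a) ** M2 a' b' c' (-a')) = 2 * a * a' + b * c' + c * b'"
  by (simp add: M2_mult M2_trace algebra_simps)

lemma MP_std_pairing:
  assumes X: "X \<in> MP_std v s r" and Y: "Y \<in> MP_std_plus v s (- r)"
  shows "vge v (trace (X ** Y)) 1"
proof -
  have "vgt v (X$1$1 * Y$1$1) 0" "vgt v (X$1$2 * Y$2$1) 0" "vgt v (X$2$1 * Y$1$2) 0"
    using vge_vgt_mult[of "X$1$1" r "Y$1$1" "-r"] vge_vgt_mult[of "X$1$2" "r - s" "Y$2$1" "-r + s"]
      vge_vgt_mult[of "X$2$1" "r + s" "Y$1$2" "-r - s"] X Y
    by (simp_all add: MP_std_def MP_std_plus_def)
  then have "vge v (2 * (X$1$1 * Y$1$1) + X$1$2 * Y$2$1 + X$2$1 * Y$1$2) 1"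
    by (intro vge_add vge_mult[OF vge_two, simplified] vgt_zero_imp_vge_one)
  moreover have "trace (X ** Y) = 2 * (X$1$1 * Y$1$1) + X$1$2 * Y$2$1 + X$2$1 * Y$1$2"
  proof -
    have "X \<in> sl2" "Y \<in> sl2" using X Y by (simp_all add: MP_std_def MP_std_plus_def)
    then have "trace (X ** Y) =
        trace (M2 (X$1$1) (X$1$2) (X$2$1) (- X$1$1) ** M2 (Y$1$1) (Y$1$2) (Y$2$1) (- Y$1$1))"
      by (metis sl2_M2_eta)
    then show ?thesis by (simp only: trace_M2_mult_sl2) (simp add: mult.assoc)
  qed
  ultimately show "vge v (trace (X ** Y)) 1" by simp
qed

text \<open>Pairing with \<open>unif\<^sup>k\<close> placed in one root coordinate at a time recovers the three
  valuation bounds; for the diagonal coordinate the pairing carries a factor 2.\<close>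

lemma MP_std_of_pairing:
  assumes X: "X \<in> sl2" and H: "\<forall>Y \<in> MP_std_plus v s (- r). vge v (trace (X ** Y)) 1"
  shows "X \<in> MP_std v s r"
proof -
  have tr: "trace (X ** M2 a b c (-a)) = 2 * X$1$1 * a + X$1$2 * c + X$2$1 * b" for a b c
    by (subst sl2_M2_eta[OF X], simp only: trace_M2_mult_sl2)
  have "vge v (2 * X$1$1) (- (- r))"
  proof (rule vge_of_unif_powi_pairing)
    fix k :: int assume "- r < real_of_int k"
    then show "vge v (2 * X$1$1 * unif powi k) 1"
      using H unif_powi[of k] by (auto simp: MP_std_plus_M2 vgt_def tr dest: bspec[of _ _ "M2 (unif powi k) 0 0 (- (unif powi k))"])
  qed
  then have "vge v (X$1$1) r" using vge_divide_two[of "2 * X$1$1"] two_neq_zero by simp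
  moreover have "vge v (X$1$2) (- (s - r))"
  proof (rule vge_of_unif_powi_pairing)
    fix k :: int assume "s - r < real_of_int k"
    then show "vge v (X$1$2 * unif powi k) 1"
      using H unif_powi[of k] tr[of 0 0 "unif powi k"]
      by (auto simp: MP_std_plus_M2_offdiag vgt_def dest: bspec[of _ _ "M2 0 0 (unif powi k) 0"])
  qed
  moreover have "vge v (X$2$1) (- (- r - s))"
  proof (rule vge_of_unif_powi_pairing)
    fix k :: int assume "- r - s < real_of_int k"
    then show "vge v (X$2$1 * unif powi k) 1"
      using H unif_powi[of k] tr[of 0 "unif powi k" 0]
      by (auto simp: MP_std_plus_M2_offdiag vgt_def dest: bspec[of _ _ "M2 0 (unif powi k) 0 0"])
  qed
  ultimately show ?thesis using X by (simp add: MP_std_def add.commute)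
qed

lemma dual_MP_std_plus:
  "{X \<in> sl2. \<forall>Y \<in> MP_std_plus v s (- r). vge v (trace (X ** Y)) 1} = MP_std v s r"
proof (intro set_eqI iffI)
  fix X assume "X \<in> {X \<in> sl2. \<forall>Y \<in> MP_std_plus v s (- r). vge v (trace (X ** Y)) 1}"
  then show "X \<in> MP_std v s r" using MP_std_of_pairing by blast
next
  fix X assume X: "X \<in> MP_std v s r"
  then have "X \<in> sl2" by (simp add: MP_std_def)
  with X show "X \<in> {X \<in> sl2. \<forall>Y \<in> MP_std_plus v s (- r). vge v (trace (X ** Y)) 1}"
    using MP_std_pairing by blast
qed

lemma std_depth_M2: "std_depth v s (M2 a b c (-a)) d \<longleftrightarrow>
   vge v a d \<and> vge v b (d - s) \<and> vge v c (d + s) \<and> \<not> (vgt v a d \<and> vgt v b (d - s) \<and> vgt v c (d + s))"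
  by (simp add: std_depth_def MP_std_M2 MP_std_plus_M2)

lemma std_depth_unique: assumes "std_depth v s Y t1" "std_depth v s Y t2" shows "t1 = t2"
proof (rule ccontr)
  assume "t1 \<noteq> t2"
  then consider "t1 < t2" | "t2 < t1" by linarith
  then show False
  proof cases
    case 1
    then have "Y \<in> MP_std_plus v s t1" using assms(2) unfolding std_depth_def UN_MP_std_eq_MP_std_plus[symmetric] by blast
    then show False using assms(1) by (simp add: std_depth_def)
  next
    case 2
    then have "Y \<in> MP_std_plus v s t2" using assms(1) unfolding std_depth_def UN_MP_std_eq_MP_std_plus[symmetric] by blast
    then show False using assms(2) by (simp add: std_depth_def)
  qed
qed

lemma std_depth_exists: assumes "Y \<in> sl2" "Y \<noteq> 0" shows "\<exists>t. std_depth v s Y t"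
proof -
  define a b c where "a = Y$1$1" "b = Y$1$2" "c = Y$2$1"
  have Y: "Y = M2 a b c (-a)" using assms(1) by (simp add: sl2_M2_eta a_b_c_def)
  define S where "S = (if a = 0 then {} else {real_of_int (v a)}) \<union> (if b = 0 then {} else {real_of_int (v b) + s})
     \<union> (if c = 0 then {} else {real_of_int (v c) - s})"
  have fin: "finite S" by (simp add: S_def)
  have ne: "S \<noteq> {}" using assms(2) Y by (auto simp: S_def M2_zero M2_eq_iff)
  define t where "t = Min S"
  have tS: "t \<in> S" using fin ne by (simp add: t_def)
  have le: "\<And>x. x \<in> S \<Longrightarrow> t \<le> x" using fin by (simp add: t_def)
  have "std_depth v s Y t" unfolding Y std_depth_M2
  proof (intro conjI)
    show "vge v a t" using le[of "real_of_int (v a)"] by (cases "a = 0") (auto simp: vge_def S_def)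
    show "vge v b (t - s)" using le[of "real_of_int (v b) + s"] by (cases "b = 0") (auto simp: vge_def S_def)
    show "vge v c (t + s)" using le[of "real_of_int (v c) - s"] by (cases "c = 0") (auto simp: vge_def S_def)
    show "\<not> (vgt v a t \<and> vgt v b (t - s) \<and> vgt v c (t + s))"
      using tS by (auto simp: vgt_def S_def split: if_splits)
  qed
  then show ?thesis by blast
qed

lemma two_std_depth_le_v_det: assumes "std_depth v s (M2 a b c (-a)) d" "a*a + b*c \<noteq> 0"
  shows "2 * d \<le> real_of_int (v (a*a + b*c))"
proof -
  have "vge v (a*a) (d + d)" using assms(1) by (intro vge_mult) (auto simp: std_depth_M2)
  moreover have "vge v (b*c) ((d - s) + (d + s))" using assms(1) by (intro vge_mult) (auto simp: std_depth_M2)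
  ultimately have "vge v (a*a + b*c) (2 * d)" by (intro vge_add) simp_all
  then show ?thesis using assms(2) by (simp add: vge_def)
qed

lemma std_depth_diagonal_leading: assumes "std_depth v s (M2 a b c (-a)) d"
  "\<not> (b \<noteq> 0 \<and> real_of_int (v b) + s = d)" "\<not> (c \<noteq> 0 \<and> real_of_int (v c) - s = d)"
  shows "a \<noteq> 0 \<and> real_of_int (v a) = d \<and> vgt v b (d - s) \<and> vgt v c (d + s)"
  using assms by (auto simp: std_depth_M2 vge_def vgt_def)

lemma v_det_diagonal_leading: assumes "a \<noteq> 0" "real_of_int (v a) = d" "vgt v b (d - s)" "vgt v c (d + s)"
  shows "a*a + b*c \<noteq> 0 \<and> real_of_int (v (a*a + b*c)) = 2 * d"
proof -
  have aa: "a*a \<noteq> 0" "real_of_int (v (a*a)) = 2 * d" using assms by (simp_all add: v_mult)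
  have "vgt v (b*c) ((d - s) + (d + s))" using assms(3,4) by (rule vgt_mult)
  then have "b*c = 0 \<or> v (a*a) < v (b*c)" using aa unfolding vgt_def by linarith
  from v_add_strict[OF aa(1) this] aa show ?thesis by simp
qed

lemma degenerate_std_depth_off_diagonal: assumes "std_depth v s (M2 a b c (-a)) d" "a*a + b*c = 0 \<or> 2 * d < real_of_int (v (a*a + b*c))"
  shows "(b \<noteq> 0 \<and> real_of_int (v b) + s = d) \<or> (c \<noteq> 0 \<and> real_of_int (v c) - s = d)"
proof (rule ccontr)
  assume "\<not> ?thesis"
  then have "a \<noteq> 0 \<and> real_of_int (v a) = d \<and> vgt v b (d - s) \<and> vgt v c (d + s)"
    using std_depth_diagonal_leading[OF assms(1)] by blast
  then have "a*a + b*c \<noteq> 0 \<and> real_of_int (v (a*a + b*c)) = 2 * d" using v_det_diagonal_leading by blast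
  with assms(2) show False by simp
qed

lemma nonzero_det_near_diagonal_leading:
  assumes t: "std_depth v s (M2 a b c (-a)) d"
    and "\<not> (b \<noteq> 0 \<and> real_of_int (v b) + s = d)" "\<not> (c \<noteq> 0 \<and> real_of_int (v c) - s = d)"
    and e: "vgt v (a1 - a) d" "vgt v (b1 - b) (d - s)" "vgt v (c1 - c) (d + s)"
  shows "a1*a1 + b1*c1 \<noteq> 0"
proof -
  have A: "a \<noteq> 0" "real_of_int (v a) = d" "vgt v b (d - s)" "vgt v c (d + s)"
    using std_depth_diagonal_leading[OF t assms(2,3)] by auto
  have "a1 - a = 0 \<or> v a < v (a1 - a)" using e(1) A by (auto simp: vgt_def)
  from v_add_strict[OF A(1) this] A(2) have a1: "a1 \<noteq> 0" "real_of_int (v a1) = d" by simp_all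
  have "vgt v b1 (d - s)" "vgt v c1 (d + s)"
    using vgt_add[OF A(3) e(2)] vgt_add[OF A(4) e(3)] by simp_all
  from v_det_diagonal_leading[OF a1 this] show ?thesis by simp
qed

lemma upper_leading_std_depth_below:
  assumes t: "std_depth v s (M2 a b c (-a)) d" and b: "b \<noteq> 0" "real_of_int (v b) + s = d"
    and s': "s' \<le> s"
  shows "std_depth v s' (M2 a b c (-a)) (real_of_int (v b) + s')"
  unfolding std_depth_M2
proof (intro conjI)
  show "vge v a (real_of_int (v b) + s')" "vge v c (real_of_int (v b) + s' + s')"
    using t b s' by (auto simp: std_depth_M2 intro: vge_mono)
  show "vge v b (real_of_int (v b) + s' - s')" by (simp add: vge_def)
  show "\<not> (vgt v a (real_of_int (v b) + s') \<and> vgt v b (real_of_int (v b) + s' - s') \<and>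
      vgt v c (real_of_int (v b) + s' + s'))"
    using b by (simp add: vgt_def)
qed

lemma upper_leading_correction_in_MP_std:
  assumes t: "std_depth v s (M2 a b c (-a)) d" and b: "b \<noteq> 0" "real_of_int (v b) + s = d"
    and q: "a*a + b*c = 0 \<or> 2 * r \<le> real_of_int (v (a*a + b*c))"
  shows "M2 0 0 (-(a*a + b*c)/b) 0 \<in> MP_std v s r"
proof (cases "a*a + b*c = 0")
  case False
  have "2 * d \<le> real_of_int (v (a*a + b*c))" using two_std_depth_le_v_det[OF t False] .
  moreover have "v (-(a*a + b*c)/b) = v (a*a + b*c) - v b"
    using False b by (metis v_divide v_uminus neg_equal_0_iff_equal)
  ultimately have "vge v (-(a*a + b*c)/b) (r + s)" using q False b by (simp add: vge_def)
  then show ?thesis by (simp add: MP_std_M2_offdiag)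
qed (simp add: MP_std_M2_offdiag)

lemma upper_leading_correction_in_MP_std_plus:
  assumes b: "b \<noteq> 0" "real_of_int (v b) + s = d"
    and q: "a*a + b*c = 0 \<or> 2 * d < real_of_int (v (a*a + b*c))" and s': "s' \<le> s"
  shows "M2 0 0 (-(a*a + b*c)/b) 0 \<in> MP_std_plus v s' (real_of_int (v b) + s')"
proof (cases "a*a + b*c = 0")
  case False
  then have "v (-(a*a + b*c)/b) = v (a*a + b*c) - v b"
    using b by (metis v_divide v_uminus neg_equal_0_iff_equal)
  then have "vgt v (-(a*a + b*c)/b) (real_of_int (v b) + s' + s')"
    using q b s' False by (simp add: vgt_def)
  then show ?thesis by (simp add: MP_std_plus_M2_offdiag)
qed (simp add: MP_std_plus_M2_offdiag)

end

section \<open>Nilpotent orbits\<close>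

lemma mem_coset_iff: "N \<in> coset X L \<longleftrightarrow> N - X \<in> L"
proof
  assume "N - X \<in> L"
  then show "N \<in> coset X L" unfolding coset_def by (rule rev_image_eqI) simp
qed (auto simp: coset_def)

lemma det_matrix_power: "det ((((**) X) ^^ n) (mat 1)) = det (X::'a::field mat2) ^ n"
  by (induction n) (simp_all add: det_mul det_I)

lemma nilpotent_mat_iff_det_eq_0:
  assumes "X \<in> sl2"
  shows "nilpotent_mat X \<longleftrightarrow> det X = 0"
proof
  assume "nilpotent_mat X"
  then obtain n where n: "(((**) X) ^^ n) (mat 1) = 0" by (auto simp: nilpotent_mat_def)
  have "n \<noteq> 0"
  proof
    assume "n = 0"
    with n have "(mat 1::'a mat2) = 0" by simp
    then show False by (simp add: M2_one M2_zero M2_eq_iff)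
  qed
  moreover have "det X ^ n = 0" using det_matrix_power[where X=X and n=n] n by (simp add: M2_zero M2_det)
  ultimately show "det X = 0" by simp
next
  assume "det X = 0"
  then have "det (M2 (X$1$1) (X$1$2) (X$2$1) (- X$1$1)) = 0" using sl2_M2_eta[OF assms] by simp
  then have "X$1$1*X$1$1 + X$1$2*X$2$1 = 0" unfolding M2_det by algebra
  then have "X ** X = 0"
    by (subst (1 2) sl2_M2_eta[OF assms]) (simp add: M2_mult M2_zero algebra_simps)
  then have "(((**) X) ^^ 2) (mat 1) = 0" by (simp add: numeral_2_eq_2 matrix_mul_rid)
  then show "nilpotent_mat X" unfolding nilpotent_mat_def by blast
qed

lemma orbit_Ad: assumes g: "g \<in> SL2" shows "orbit (Ad g X) = orbit X"
proof
  show "orbit (Ad g X) \<subseteq> orbit X"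
  proof
    fix Y assume "Y \<in> orbit (Ad g X)"
    then obtain k where k: "k \<in> SL2" "Y = Ad k (Ad g X)" by (auto simp: orbit_def)
    then have "Y = Ad (k ** g) X" using g by (simp add: Ad_Ad)
    moreover have "k ** g \<in> SL2" using k g by (simp add: SL2_mult)
    ultimately show "Y \<in> orbit X" unfolding orbit_def by blast
  qed
  show "orbit X \<subseteq> orbit (Ad g X)"
  proof
    fix Y assume "Y \<in> orbit X"
    then obtain k where k: "k \<in> SL2" "Y = Ad k X" by (auto simp: orbit_def)
    have "Ad (k ** matrix_inv g) (Ad g X) = Ad ((k ** matrix_inv g) ** g) X"
      using g k by (simp add: Ad_Ad SL2_mult SL2_matrix_inv)
    also have "\<dots> = Ad k X" using SL2_inverse_mult[OF g] by (simp add: matrix_mul_assoc[symmetric] matrix_mul_rid)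
    finally have "Y = Ad (k ** matrix_inv g) (Ad g X)" using k by simp
    moreover have "k ** matrix_inv g \<in> SL2" using k g by (simp add: SL2_mult SL2_matrix_inv)
    ultimately show "Y \<in> orbit (Ad g X)" unfolding orbit_def by blast
  qed
qed

lemma mem_orbit_self: "X \<in> orbit X"
proof -
  have "X = Ad (mat 1) X" by (simp add: Ad_one)
  then show ?thesis unfolding orbit_def using SL2_one by blast
qed

lemma orbit_nilpotent_upper: assumes "b \<noteq> 0" "a*a + b*c = 0"
  shows "orbit (M2 a b c (-a)) = orbit (M2 0 b 0 0)"
proof -
  have "b*c = -(a*a)" using assms(2) by (simp add: eq_neg_iff_add_eq_0 add.commute)
  then have c: "c = -(a*a)/b" using assms(1) by (simp add: field_simps)
  have "M2 a b c (-a) = Ad (M2 1 0 (-a/b) 1) (M2 0 b 0 0)"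
    using assms(1) unfolding c by (simp add: Ad_M2 M2_mult)
  then show ?thesis using orbit_Ad[of "M2 1 0 (-a/b) 1"] by (simp add: M2_in_SL2_iff)
qed

lemma orbit_nilpotent_lower: assumes "c \<noteq> 0" "a*a + b*c = 0"
  shows "orbit (M2 a b c (-a)) = orbit (M2 0 0 c 0)"
proof -
  have "b*c = -(a*a)" using assms(2) by (simp add: eq_neg_iff_add_eq_0 add.commute)
  then have b: "b = -(a*a)/c" using assms(1) by (simp add: field_simps)
  have "M2 a b c (-a) = Ad (M2 1 (a/c) 0 1) (M2 0 0 c 0)"
    using assms(1) unfolding b by (simp add: Ad_M2 M2_mult)
  then show ?thesis using orbit_Ad[of "M2 1 (a/c) 0 1"] by (simp add: M2_in_SL2_iff)
qed

lemma orbit_upper_square_scale: assumes "w \<noteq> 0" shows "orbit (M2 0 (b*(w*w)) 0 0) = orbit (M2 0 b 0 0)"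
proof -
  have "M2 0 (b*(w*w)) 0 0 = Ad (M2 w 0 0 (1/w)) (M2 0 b 0 0)"
    using assms by (simp add: Ad_M2 M2_mult mult_ac)
  then show ?thesis using orbit_Ad[of "M2 w 0 0 (1/w)"] assms by (simp add: M2_in_SL2_iff)
qed

lemma orbit_lower_square_scale: assumes "w \<noteq> 0" shows "orbit (M2 0 0 (c*(w*w)) 0) = orbit (M2 0 0 c 0)"
proof -
  have "M2 0 0 (c*(w*w)) 0 = Ad (M2 (1/w) 0 0 w) (M2 0 0 c 0)"
    using assms by (simp add: Ad_M2 M2_mult mult_ac)
  then show ?thesis using orbit_Ad[of "M2 (1/w) 0 0 w"] assms by (simp add: M2_in_SL2_iff)
qed

lemma Ad_mem_orbit_iff: assumes g: "g \<in> SL2" shows "Ad g Z \<in> orbit N \<longleftrightarrow> Z \<in> orbit N"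
proof
  assume "Z \<in> orbit N"
  then obtain k where k: "k \<in> SL2" "Z = Ad k N" by (auto simp: orbit_def)
  then have "Ad g Z = Ad (g ** k) N" "g ** k \<in> SL2" using g by (simp_all add: Ad_Ad SL2_mult)
  then show "Ad g Z \<in> orbit N" unfolding orbit_def by blast
next
  assume "Ad g Z \<in> orbit N"
  then obtain k where k: "k \<in> SL2" "Ad g Z = Ad k N" by (auto simp: orbit_def)
  then have "Z = Ad (matrix_inv g ** k) N" "matrix_inv g ** k \<in> SL2"
    using g Ad_inv_Ad[OF g, of Z] by (simp_all add: Ad_Ad[symmetric] SL2_mult SL2_matrix_inv)
  then show "Z \<in> orbit N" unfolding orbit_def by blast
qed

definition lead_orbit :: "('a::field \<Rightarrow> int) \<Rightarrow> real \<Rightarrow> 'a mat2 \<Rightarrow> real \<Rightarrow> 'a mat2 set" where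
  "lead_orbit v s Y d =
     (if Y$1$2 \<noteq> 0 \<and> real_of_int (v (Y$1$2)) + s = d then orbit (M2 0 (Y$1$2) 0 0)
      else orbit (M2 0 0 (Y$2$1) 0))"

context odd_residual_valued_field
begin

lemma close_is_square_multiple:
  assumes "b \<noteq> 0" "vgt v (b1 - b) (real_of_int (v b))"
  shows "\<exists>w. w \<noteq> 0 \<and> b1 = b * (w * w)"
proof -
  have "vge v (b1 / b - 1) 1"
  proof (cases "b1 = b")
    case False
    have "b1 / b - 1 = (b1 - b) / b" using assms(1) by (simp add: field_simps)
    moreover have "v (b1 - b) > v b" using assms(2) False by (simp add: vgt_def)
    ultimately show ?thesis using assms(1) False by (simp add: vge_def v_divide)
  qed (simp add: assms(1))
  from principal_unit_is_square[OF this] obtain w where "w \<noteq> 0" "w * w = b1 / b" by blast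
  then show ?thesis using assms(1) by (intro exI[of _ w]) simp
qed

lemma orbit_nilpotent_close_upper:
  assumes "b \<noteq> 0" "vgt v (b1 - b) (real_of_int (v b))" "a1*a1 + b1*c1 = 0"
  shows "orbit (M2 a1 b1 c1 (-a1)) = orbit (M2 0 b 0 0)"
proof -
  obtain w where w: "w \<noteq> 0" "b1 = b * (w * w)" using close_is_square_multiple assms(1,2) by blast
  moreover have "b1 \<noteq> 0" using w assms(1) by simp
  ultimately have "orbit (M2 a1 b1 c1 (-a1)) = orbit (M2 0 b1 0 0)"
    using orbit_nilpotent_upper[of b1 a1 c1] assms(3) by simp
  also have "\<dots> = orbit (M2 0 b 0 0)" using orbit_upper_square_scale[OF w(1)] w(2) by simp
  finally show ?thesis .
qed

lemma orbit_nilpotent_close_lower: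
  assumes "c \<noteq> 0" "vgt v (c1 - c) (real_of_int (v c))" "a1*a1 + b1*c1 = 0"
  shows "orbit (M2 a1 b1 c1 (-a1)) = orbit (M2 0 0 c 0)"
proof -
  obtain w where w: "w \<noteq> 0" "c1 = c * (w * w)" using close_is_square_multiple assms(1,2) by blast
  moreover have "c1 \<noteq> 0" using w assms(1) by simp
  ultimately have "orbit (M2 a1 b1 c1 (-a1)) = orbit (M2 0 0 c1 0)"
    using orbit_nilpotent_lower[of c1 a1 b1] assms(3) by simp
  also have "\<dots> = orbit (M2 0 0 c 0)" using orbit_lower_square_scale[OF w(1)] w(2) by simp
  finally show ?thesis .
qed

text \<open>In the off-diagonal cases the leading entry of \<open>Y\<close> and that of \<open>N\<close> differ by a square
  factor, which a torus element absorbs.\<close>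

lemma orbit_nilpotent_in_degenerate_coset:
  assumes t: "std_depth v s Y d" and Y: "Y \<in> sl2" and N: "N \<in> sl2" "det N = 0"
    and e: "N - Y \<in> MP_std_plus v s d"
  shows "orbit N = lead_orbit v s Y d"
proof -
  define a b c where "a = Y$1$1" "b = Y$1$2" "c = Y$2$1"
  define a1 b1 c1 where "a1 = N$1$1" "b1 = N$1$2" "c1 = N$2$1"
  have YE: "Y = M2 a b c (-a)" using Y by (simp add: sl2_M2_eta a_b_c_def)
  have NE: "N = M2 a1 b1 c1 (-a1)" using N by (simp add: sl2_M2_eta a1_b1_c1_def)
  have nil: "a1*a1 + b1*c1 = 0" using N(2) unfolding NE M2_det by (simp add: algebra_simps)
    (metis add.inverse_unique add_eq_0_iff)
  have ee: "vgt v (a1 - a) d" "vgt v (b1 - b) (d - s)" "vgt v (c1 - c) (d + s)"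
    using e by (simp_all add: MP_std_plus_def a_b_c_def a1_b1_c1_def)
  consider (upper) "b \<noteq> 0" "real_of_int (v b) + s = d"
    | (lower) "\<not> (b \<noteq> 0 \<and> real_of_int (v b) + s = d)" "c \<noteq> 0" "real_of_int (v c) - s = d"
    | (diagonal) "\<not> (b \<noteq> 0 \<and> real_of_int (v b) + s = d)" "\<not> (c \<noteq> 0 \<and> real_of_int (v c) - s = d)"
    by blast
  then show ?thesis
  proof cases
    case upper
    then have "vgt v (b1 - b) (real_of_int (v b))" using ee(2) by (metis add_diff_cancel_right')
    then show ?thesis using orbit_nilpotent_close_upper[of b b1 a1 c1] upper nil
      by (simp add: lead_orbit_def NE a_b_c_def[symmetric])
  next
    case lower
    then have "vgt v (c1 - c) (real_of_int (v c))" using ee(3) by (metis diff_add_cancel)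
    then show ?thesis using orbit_nilpotent_close_lower[of c c1 a1 b1] lower nil
      by (auto simp: lead_orbit_def NE a_b_c_def[symmetric])
  next
    case diagonal
    then show ?thesis using nonzero_det_near_diagonal_leading[OF t[unfolded YE] diagonal ee] nil by simp
  qed
qed

end

section \<open>Lattices at points of the Bruhat--Tits tree\<close>

definition torus :: "'a::field \<Rightarrow> 'a mat2" where
  "torus t = M2 t 0 0 (inverse t)"

definition weyl :: "'a::field mat2" where
  "weyl = M2 0 1 (-1) 0"

lemma torus_SL2: "t \<noteq> 0 \<Longrightarrow> torus t \<in> SL2"
  by (simp add: torus_def M2_in_SL2_iff)

lemma weyl_SL2: "weyl \<in> SL2"
  by (simp add: weyl_def M2_in_SL2_iff)

lemma Ad_inv_torus_M2:
  "t \<noteq> 0 \<Longrightarrow> Ad (matrix_inv (torus t)) (M2 a b c (-a)) = M2 a (b * (inverse t * inverse t)) (c * (t * t)) (-a)"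
  by (simp add: torus_def matrix_inv_M2 Ad_M2 M2_mult field_simps)

lemma Ad_inv_weyl_M2: "Ad (matrix_inv weyl) (M2 a b c (-a)) = M2 (-a) (-c) (-b) (- (-a))"
  by (simp add: weyl_def matrix_inv_M2 Ad_M2 M2_mult)

lemma Ad_inv_mult: "g \<in> SL2 \<Longrightarrow> k \<in> SL2 \<Longrightarrow> Ad (matrix_inv (g ** k)) Z = Ad (matrix_inv k) (Ad (matrix_inv g) Z)"
  by (simp add: matrix_inv_mult_SL2 Ad_Ad SL2_matrix_inv)

context odd_residual_valued_field
begin

lemma MP_plus_eq: "h \<in> SL2 \<Longrightarrow> MP_plus v (h, s) t = Ad h ` MP_std_plus v s t"
  unfolding MP_plus_def MP_def UN_MP_std_eq_MP_std_plus[symmetric] by (simp add: image_UN)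

lemma MPd_eq:
  assumes h: "h \<in> SL2"
  shows "MPd v (h, s) r = Ad h ` MP_std v s r"
proof -
  have tr: "trace (X ** Ad h Y) = trace (Ad (matrix_inv h) X ** Y)" for X Y
    using trace_Ad_mult[OF SL2_matrix_inv[OF h], of X "Ad h Y"] Ad_inv_Ad[OF h] by simp
  have "X \<in> MPd v (h, s) r \<longleftrightarrow> Ad (matrix_inv h) X \<in> MP_std v s r" for X
  proof -
    have "X \<in> MPd v (h, s) r \<longleftrightarrow>
        X \<in> sl2 \<and> (\<forall>Y \<in> MP_std_plus v s (- r). vge v (trace (X ** Ad h Y)) 1)"
      unfolding MPd_def MP_plus_eq[OF h] by blast
    also have "\<dots> \<longleftrightarrow> Ad (matrix_inv h) X \<in>
        {X \<in> sl2. \<forall>Y \<in> MP_std_plus v s (- r). vge v (trace (X ** Y)) 1}"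
      by (simp add: tr sl2_Ad_iff[OF SL2_matrix_inv[OF h]])
    finally show ?thesis by (simp only: dual_MP_std_plus)
  qed
  then show ?thesis using Ad_image_iff[OF h] by blast
qed

lemma MPd_plus_eq:
  assumes "h \<in> SL2"
  shows "MPd_plus v (h, s) r = Ad h ` MP_std_plus v s r"
  unfolding MPd_plus_def MPd_eq[OF assms] UN_MP_std_eq_MP_std_plus[symmetric] by (simp add: image_UN)

lemma mem_MPd_iff: "h \<in> SL2 \<Longrightarrow> X \<in> MPd v (h, s) r \<longleftrightarrow> Ad (matrix_inv h) X \<in> MP_std v s r"
  by (simp add: MPd_eq Ad_image_iff)

lemma mem_MPd_plus_iff:
  "h \<in> SL2 \<Longrightarrow> X \<in> MPd_plus v (h, s) r \<longleftrightarrow> Ad (matrix_inv h) X \<in> MP_std_plus v s r"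
  by (simp add: MPd_plus_eq Ad_image_iff)

lemma mem_MPdE_iff:
  "h \<in> SL2 \<Longrightarrow> X \<in> MPdE v (h, s) r \<longleftrightarrow> (\<forall>t. ereal t \<le> r \<longrightarrow> Ad (matrix_inv h) X \<in> MP_std v s t)"
  by (simp add: MPdE_def mem_MPd_iff)

lemma depth_at_eq_std:
  "h \<in> SL2 \<Longrightarrow> depth_at v (h, s) X = (THE t. std_depth v s (Ad (matrix_inv h) X) t)"
  unfolding depth_at_def std_depth_def by (simp add: mem_MPd_iff mem_MPd_plus_iff)

lemma depth_at_eqI:
  assumes "h \<in> SL2" "std_depth v s (Ad (matrix_inv h) X) t"
  shows "depth_at v (h, s) X = t"
  unfolding depth_at_eq_std[OF assms(1)]
proof (rule the_equality)
  show "std_depth v s (Ad (matrix_inv h) X) t" by (fact assms(2))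
  show "t' = t" if "std_depth v s (Ad (matrix_inv h) X) t'" for t'
    using that assms(2) by (rule std_depth_unique)
qed

lemma std_depth_depth_at:
  assumes h: "h \<in> SL2" and X: "X \<in> sl2" "X \<noteq> 0"
  shows "std_depth v s (Ad (matrix_inv h) X) (depth_at v (h, s) X)"
proof -
  have "Ad (matrix_inv h) X \<in> sl2" using X h by (simp add: sl2_Ad_iff SL2_matrix_inv)
  moreover have "Ad (matrix_inv h) X \<noteq> 0" using X Ad_Ad_inv[OF h, of X] by (metis Ad_zero)
  ultimately obtain t where t: "std_depth v s (Ad (matrix_inv h) X) t" using std_depth_exists by blast
  then show ?thesis using depth_at_eqI[OF h t] by simp
qed

lemma two_depth_at_le_v_det:
  assumes h: "h \<in> SL2" and X: "X \<in> sl2" "X \<noteq> 0" "det X \<noteq> 0"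
  shows "2 * depth_at v (h, s) X \<le> real_of_int (v (det X))"
proof -
  define Y where "Y = Ad (matrix_inv h) X"
  define a b c where "a = Y$1$1" "b = Y$1$2" "c = Y$2$1"
  have YE: "Y = M2 a b c (-a)" using X h by (simp add: Y_def sl2_M2_eta a_b_c_def sl2_Ad_iff SL2_matrix_inv)
  have dX: "det X = - (a*a + b*c)"
    using det_Ad[OF SL2_matrix_inv[OF h], of X] YE by (simp add: Y_def[symmetric] M2_det algebra_simps)
  have "std_depth v s (M2 a b c (-a)) (depth_at v (h, s) X)"
    using std_depth_depth_at[OF h X(1,2)] YE by (simp add: Y_def)
  moreover have "a*a + b*c \<noteq> 0"
  proof
    assume "a*a + b*c = 0"
    then have "det X = 0" using dX by simp
    then show False using X(3) by simp
  qed
  moreover have "v (det X) = v (a*a + b*c)" using dX by (metis v_uminus)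
  ultimately show ?thesis using two_std_depth_le_v_det by simp
qed

lemma depth_le_half_v_det:
  assumes "X \<in> sl2" "X \<noteq> 0" "det X \<noteq> 0"
  shows "depth v X \<le> ereal (real_of_int (v (det X)) / 2)"
  unfolding depth_def
proof (rule SUP_least)
  fix x :: "'a mat2 \<times> real" assume "x \<in> BT"
  then obtain h s where "x = (h, s)" "h \<in> SL2" by (auto simp: BT_def)
  then show "ereal (depth_at v x X) \<le> ereal (real_of_int (v (det X)) / 2)"
    using two_depth_at_le_v_det[OF _ assms, of h s] by simp
qed

lemma depth_at_Ad:
  "g \<in> SL2 \<Longrightarrow> k \<in> SL2 \<Longrightarrow> depth_at v (g ** k, s) (Ad g X) = depth_at v (k, s) X"
  by (simp add: depth_at_eq_std SL2_mult Ad_inv_mult Ad_inv_Ad)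

lemma minorb_Ad:
  assumes g: "g \<in> SL2" and k: "k \<in> SL2"
  shows "minorb v (Ad g X) (g ** k, s) = minorb v X (k, s)"
proof -
  have P: "MPd_plus v (g ** k, s) t = Ad g ` MPd_plus v (k, s) t" for t
    using g k by (simp add: MPd_plus_eq SL2_mult image_image Ad_Ad)
  have C: "coset (Ad g X) (Ad g ` L) = Ad g ` coset X L" for L
    by (simp add: coset_def image_image Ad_add)
  have I: "Ob \<inter> Ad g ` S \<noteq> {} \<longleftrightarrow> Ob \<inter> S \<noteq> {}" if "nil_orbit Ob" for Ob S
    using that Ad_mem_orbit_iff[OF g] by (auto simp: nil_orbit_def)
  have "meets_deg v (Ad g X) (g ** k, s) = meets_deg v X (k, s)"
    unfolding meets_deg_def depth_at_Ad[OF g k] P C using I by blast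
  then show ?thesis by (simp only: minorb_def)
qed

lemma MP_std_Ad_inv_torus:
  assumes "t \<noteq> 0"
  shows "Ad (matrix_inv (torus t)) W \<in> MP_std v s r \<longleftrightarrow> W \<in> MP_std v (s - 2 * real_of_int (v t)) r"
proof (cases "W \<in> sl2")
  case False
  then show ?thesis using sl2_Ad_iff[OF SL2_matrix_inv[OF torus_SL2[OF assms]]] by (auto simp: MP_std_def)
next
  case True
  define a b c where "a = W$1$1" "b = W$1$2" "c = W$2$1"
  have W: "W = M2 a b c (-a)" using True by (simp add: sl2_M2_eta a_b_c_def)
  have "vge v (b * (inverse t * inverse t)) (r - s) \<longleftrightarrow> vge v b (r - (s - 2 * real_of_int (v t)))"
    using assms by (cases "b = 0") (simp_all add: vge_def v_mult v_inverse algebra_simps)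
  moreover have "vge v (c * (t * t)) (r + s) \<longleftrightarrow> vge v c (r + (s - 2 * real_of_int (v t)))"
    using assms by (cases "c = 0") (simp_all add: vge_def v_mult algebra_simps)
  ultimately show ?thesis unfolding W Ad_inv_torus_M2[OF assms] MP_std_M2 by simp
qed

lemma MP_std_Ad_inv_weyl: "Ad (matrix_inv weyl) W \<in> MP_std v (- s) r \<longleftrightarrow> W \<in> MP_std v s r"
proof (cases "W \<in> sl2")
  case False
  then show ?thesis using sl2_Ad_iff[OF SL2_matrix_inv[OF weyl_SL2]] by (auto simp: MP_std_def)
next
  case True
  define a b c where "a = W$1$1" "b = W$1$2" "c = W$2$1"
  have W: "W = M2 a b c (-a)" using True by (simp add: sl2_M2_eta a_b_c_def)
  show ?thesis unfolding W Ad_inv_weyl_M2 MP_std_M2 by auto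
qed

text \<open>Right translation by a torus element moves a point along the standard apartment, and
  by the Weyl element reflects it: \<open>(h t, s)\<close> and \<open>(h, s - 2 v(t))\<close>, as well as \<open>(h w, -s)\<close> and
  \<open>(h, s)\<close>, are the same point of the tree.\<close>

lemma MPd_torus:
  assumes h: "h \<in> SL2" and t: "t \<noteq> 0"
  shows "MPd v (h ** torus t, s) = MPd v (h, s - 2 * real_of_int (v t))"
proof (intro ext set_eqI)
  fix r X
  show "X \<in> MPd v (h ** torus t, s) r \<longleftrightarrow> X \<in> MPd v (h, s - 2 * real_of_int (v t)) r"
    using h torus_SL2[OF t]
    by (simp add: mem_MPd_iff SL2_mult Ad_inv_mult MP_std_Ad_inv_torus[OF t])
qed

lemma MPd_weyl:
  assumes h: "h \<in> SL2"
  shows "MPd v (h ** weyl, - s) = MPd v (h, s)"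
proof (intro ext set_eqI)
  fix r X
  have "X \<in> MPd v (h ** weyl, - s) r \<longleftrightarrow>
      Ad (matrix_inv weyl) (Ad (matrix_inv h) X) \<in> MP_std v (- s) r"
    using mem_MPd_iff[OF SL2_mult[OF h weyl_SL2]] Ad_inv_mult[OF h weyl_SL2] by simp
  then show "X \<in> MPd v (h ** weyl, - s) r \<longleftrightarrow> X \<in> MPd v (h, s) r"
    using mem_MPd_iff[OF h] MP_std_Ad_inv_weyl by simp
qed

lemma same_point:
  assumes "MPd v x = MPd v y"
  shows "depth_at v x = depth_at v y" "minorb v X x = minorb v X y" "MPdE v x = MPdE v y"
proof -
  have P: "MPd_plus v x = MPd_plus v y" unfolding MPd_plus_def[abs_def] assms ..
  show D: "depth_at v x = depth_at v y" unfolding depth_at_def[abs_def] assms P ..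
  show "minorb v X x = minorb v X y" unfolding minorb_def meets_deg_def P D ..
  show "MPdE v x = MPdE v y" unfolding MPdE_def[abs_def] assms ..
qed

end

section \<open>Degenerate cosets\<close>

context odd_residual_valued_field
begin

lemma orbit_nilpotent_in_degenerate_coset_at:
  assumes h: "h \<in> SL2" and X: "X \<in> sl2" "X \<noteq> 0" and M: "M \<in> sl2" "det M = 0"
    and e: "M \<in> coset X (MPd_plus v (h, s) (depth_at v (h, s) X))"
  shows "orbit M = lead_orbit v s (Ad (matrix_inv h) X) (depth_at v (h, s) X)"
proof -
  have "orbit M = orbit (Ad (matrix_inv h) M)" using orbit_Ad[OF SL2_matrix_inv[OF h]] by simp
  also have "\<dots> = lead_orbit v s (Ad (matrix_inv h) X) (depth_at v (h, s) X)"
    using M e h X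
    by (intro orbit_nilpotent_in_degenerate_coset[OF std_depth_depth_at[OF h X]])
      (simp_all add: sl2_Ad_iff SL2_matrix_inv det_Ad mem_coset_iff mem_MPd_plus_iff Ad_diff)
  finally show ?thesis .
qed

text \<open>Only one nilpotent orbit meets a degenerate coset, so minimality in the closure order is
  automatic.\<close>

lemma minorb_eq_orbit:
  assumes h: "h \<in> SL2" and X: "X \<in> sl2" "X \<noteq> 0" and N: "N \<in> sl2" "det N = 0"
    and e: "N \<in> coset X (MPd_plus v (h, s) (depth_at v (h, s) X))"
  shows "minorb v X (h, s) = orbit N"
proof -
  have uniq: "Ob = orbit N" if "meets_deg v X (h, s) Ob" for Ob
  proof -
    from that obtain N0 M where N0: "N0 \<in> sl2" "nilpotent_mat N0" "Ob = orbit N0"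
      and M: "M \<in> Ob" "M \<in> coset X (MPd_plus v (h, s) (depth_at v (h, s) X))"
      by (auto simp: meets_deg_def nil_orbit_def)
    from M(1) N0(3) obtain g where g: "g \<in> SL2" "M = Ad g N0" by (auto simp: orbit_def)
    have "M \<in> sl2" "det M = 0"
      using g N0 nilpotent_mat_iff_det_eq_0[OF N0(1)] by (simp_all add: sl2_Ad_iff det_Ad)
    then have "orbit M = orbit N"
      using orbit_nilpotent_in_degenerate_coset_at[OF h X] M(2) N e by simp
    moreover have "orbit M = Ob" using g N0 orbit_Ad by simp
    ultimately show ?thesis by simp
  qed
  have "meets_deg v X (h, s) (orbit N)"
    using N e mem_orbit_self[of N] nilpotent_mat_iff_det_eq_0[OF N(1)]
    by (auto simp: meets_deg_def nil_orbit_def)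
  with uniq show ?thesis unfolding minorb_def by (intro the_equality) blast+
qed

lemma two_le_v_det_of_le_depth:
  assumes "X \<in> sl2" "X \<noteq> 0" "ereal r \<le> depth v X"
  shows "det X = 0 \<or> 2 * r \<le> real_of_int (v (det X))"
proof (cases "det X = 0")
  case False
  then have "ereal r \<le> ereal (real_of_int (v (det X)) / 2)"
    using depth_le_half_v_det[OF assms(1,2)] assms(3) order.trans by blast
  then show ?thesis by simp
qed simp

lemma two_less_v_det_of_less_depth:
  assumes "X \<in> sl2" "X \<noteq> 0" "ereal r < depth v X"
  shows "det X = 0 \<or> 2 * r < real_of_int (v (det X))"
proof (cases "det X = 0")
  case False
  then have "ereal r < ereal (real_of_int (v (det X)) / 2)"
    using depth_le_half_v_det[OF assms(1,2)] assms(3) order.strict_trans2 by blast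
  then show ?thesis by simp
qed simp

lemma exists_point_below:
  assumes "h \<in> SL2"
  shows "\<exists>k\<in>SL2. \<exists>s'\<le>s. MPd v (k, s0) = MPd v (h, s')"
proof -
  define m where "m = \<lceil>(s0 - s) / 2\<rceil>"
  have "(s0 - s) / 2 \<le> real_of_int m" unfolding m_def by (rule le_of_int_ceiling)
  then have "s0 - 2 * real_of_int m \<le> s" by simp
  moreover have "MPd v (h ** torus (unif powi m), s0) = MPd v (h, s0 - 2 * real_of_int m)"
    using MPd_torus[OF assms] unif_powi[of m] by simp
  moreover have "h ** torus (unif powi m) \<in> SL2"
    using assms unif_powi[of m] by (simp add: SL2_mult torus_SL2)
  ultimately show ?thesis by blast
qed

lemma upper_leading_minorb:
  assumes G: "\<Gamma> \<in> sl2" "\<Gamma> \<noteq> 0" and h: "h \<in> SL2"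
    and lt: "ereal (depth_at v (h, s) \<Gamma>) < depth v \<Gamma>"
    and b: "Ad (matrix_inv h) \<Gamma> $1$2 \<noteq> 0"
      "real_of_int (v (Ad (matrix_inv h) \<Gamma> $1$2)) + s = depth_at v (h, s) \<Gamma>"
  obtains N where "N \<in> sl2" "det N = 0" "N \<in> coset \<Gamma> (MPdE v (h, s) (depth v \<Gamma>))"
    "\<And>s'. s' \<le> s \<Longrightarrow> depth_at v (h, s') \<Gamma> \<le> depth_at v (h, s) \<Gamma> \<and> minorb v \<Gamma> (h, s') = orbit N"
proof -
  define d where "d = depth_at v (h, s) \<Gamma>"
  define Y where "Y = Ad (matrix_inv h) \<Gamma>"
  define a b c where "a = Y$1$1" "b = Y$1$2" "c = Y$2$1"
  have YE: "Y = M2 a b c (-a)" using G h by (simp add: Y_def sl2_M2_eta a_b_c_def sl2_Ad_iff SL2_matrix_inv)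
  have t: "std_depth v s (M2 a b c (-a)) d" using std_depth_depth_at[OF h G] YE by (simp add: Y_def d_def)
  have b': "b \<noteq> 0" "real_of_int (v b) + s = d" using b by (simp_all add: Y_def a_b_c_def d_def)
  have det: "det \<Gamma> = - (a*a + b*c)"
    using det_Ad[OF SL2_matrix_inv[OF h], of \<Gamma>] YE by (simp add: Y_def[symmetric] M2_det algebra_simps)
  have v_det: "v (det \<Gamma>) = v (a*a + b*c)" using det by (metis v_uminus)
  have det_0_iff: "det \<Gamma> = 0 \<longleftrightarrow> a*a + b*c = 0" by (simp only: det neg_equal_0_iff_equal)
  define N where "N = Ad h (M2 a b (-(a*a)/b) (-a))"
  have N: "N \<in> sl2" "det N = 0" using h b'(1) by (simp_all add: N_def sl2_Ad_iff det_Ad M2_det)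
  have corr: "Ad (matrix_inv h) (N - \<Gamma>) = M2 0 0 (-(a*a + b*c)/b) 0"
    using h b'(1) by (simp add: N_def Ad_diff Ad_inv_Ad Y_def[symmetric] YE M2_diff field_simps)
  show thesis
  proof
    show "N \<in> sl2" "det N = 0" by (fact N)+
    show "N \<in> coset \<Gamma> (MPdE v (h, s) (depth v \<Gamma>))"
      unfolding mem_coset_iff mem_MPdE_iff[OF h] corr
    proof (intro allI impI)
      fix r assume "ereal r \<le> depth v \<Gamma>"
      then have "det \<Gamma> = 0 \<or> 2 * r \<le> real_of_int (v (det \<Gamma>))"
        by (rule two_le_v_det_of_le_depth[OF G])
      then have "a*a + b*c = 0 \<or> 2 * r \<le> real_of_int (v (a*a + b*c))"
        by (simp only: det_0_iff v_det)
      then show "M2 0 0 (-(a*a + b*c)/b) 0 \<in> MP_std v s r"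
        by (rule upper_leading_correction_in_MP_std[OF t b'])
    qed
    fix s' assume s': "s' \<le> s"
    have D: "depth_at v (h, s') \<Gamma> = real_of_int (v b) + s'"
      using upper_leading_std_depth_below[OF t b' s'] by (intro depth_at_eqI[OF h]) (simp add: Y_def[symmetric] YE)
    have "det \<Gamma> = 0 \<or> 2 * d < real_of_int (v (det \<Gamma>))"
      using two_less_v_det_of_less_depth[OF G lt] by (simp add: d_def)
    then have "a*a + b*c = 0 \<or> 2 * d < real_of_int (v (a*a + b*c))"
      by (simp only: det_0_iff v_det)
    then have "M2 0 0 (-(a*a + b*c)/b) 0 \<in> MP_std_plus v s' (real_of_int (v b) + s')"
      using upper_leading_correction_in_MP_std_plus[OF b' _ s'] by simp
    then have "minorb v \<Gamma> (h, s') = orbit N"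
      by (intro minorb_eq_orbit[OF h G N]) (simp add: mem_coset_iff mem_MPd_plus_iff[OF h] corr D)
    then show "depth_at v (h, s') \<Gamma> \<le> depth_at v (h, s) \<Gamma> \<and> minorb v \<Gamma> (h, s') = orbit N"
      using D b'(2) s' by (simp add: d_def)
  qed
qed

lemma degenerate_point_upper_leading:
  assumes G: "\<Gamma> \<in> sl2" "\<Gamma> \<noteq> 0" and h: "h \<in> SL2"
    and lt: "ereal (depth_at v (h, s) \<Gamma>) < depth v \<Gamma>"
    and b: "Ad (matrix_inv h) \<Gamma> $1$2 \<noteq> 0"
      "real_of_int (v (Ad (matrix_inv h) \<Gamma> $1$2)) + s = depth_at v (h, s) \<Gamma>"
  obtains N where "minorb v \<Gamma> (h, s) = orbit N" "N \<in> coset \<Gamma> (MPdE v (h, s) (depth v \<Gamma>))"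
    "\<And>s0. \<exists>k\<in>SL2. ereal (depth_at v (k, s0) \<Gamma>) < depth v \<Gamma> \<and> minorb v \<Gamma> (k, s0) = orbit N"
proof -
  obtain N where N: "N \<in> coset \<Gamma> (MPdE v (h, s) (depth v \<Gamma>))"
    and below: "\<And>s'. s' \<le> s \<Longrightarrow>
      depth_at v (h, s') \<Gamma> \<le> depth_at v (h, s) \<Gamma> \<and> minorb v \<Gamma> (h, s') = orbit N"
    using upper_leading_minorb[OF G h lt b] by metis
  show thesis
  proof
    show "minorb v \<Gamma> (h, s) = orbit N" using below[of s] by simp
    show "N \<in> coset \<Gamma> (MPdE v (h, s) (depth v \<Gamma>))" by (fact N)
    fix s0
    obtain k s' where k: "k \<in> SL2" "s' \<le> s" "MPd v (k, s0) = MPd v (h, s')"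
      using exists_point_below[OF h] by blast
    have "ereal (depth_at v (h, s') \<Gamma>) \<le> ereal (depth_at v (h, s) \<Gamma>)"
      using below[OF k(2)] by simp
    then have "ereal (depth_at v (k, s0) \<Gamma>) < depth v \<Gamma>"
      using same_point(1)[OF k(3)] lt by (metis order.strict_trans1)
    moreover have "minorb v \<Gamma> (k, s0) = orbit N" using below[OF k(2)] same_point(2)[OF k(3)] by simp
    ultimately show "\<exists>k\<in>SL2. ereal (depth_at v (k, s0) \<Gamma>) < depth v \<Gamma> \<and> minorb v \<Gamma> (k, s0) = orbit N"
      using k(1) by blast
  qed
qed

text \<open>If instead the lower entry leads, the Weyl element turns it into the upper one without
  moving the point.\<close>

lemma degenerate_point:
  assumes G: "\<Gamma> \<in> sl2" "\<Gamma> \<noteq> 0" and h: "h \<in> SL2"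
    and lt: "ereal (depth_at v (h, s) \<Gamma>) < depth v \<Gamma>"
  obtains N where "minorb v \<Gamma> (h, s) = orbit N" "N \<in> coset \<Gamma> (MPdE v (h, s) (depth v \<Gamma>))"
    "\<And>s0. \<exists>k\<in>SL2. ereal (depth_at v (k, s0) \<Gamma>) < depth v \<Gamma> \<and> minorb v \<Gamma> (k, s0) = orbit N"
proof -
  define d where "d = depth_at v (h, s) \<Gamma>"
  define Y where "Y = Ad (matrix_inv h) \<Gamma>"
  define a b c where "a = Y$1$1" "b = Y$1$2" "c = Y$2$1"
  have YE: "Y = M2 a b c (-a)" using G h by (simp add: Y_def sl2_M2_eta a_b_c_def sl2_Ad_iff SL2_matrix_inv)
  have t: "std_depth v s (M2 a b c (-a)) d" using std_depth_depth_at[OF h G] YE by (simp add: Y_def d_def)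
  have det: "det \<Gamma> = - (a*a + b*c)"
    using det_Ad[OF SL2_matrix_inv[OF h], of \<Gamma>] YE by (simp add: Y_def[symmetric] M2_det algebra_simps)
  have "det \<Gamma> = 0 \<or> 2 * d < real_of_int (v (det \<Gamma>))"
    using two_less_v_det_of_less_depth[OF G lt] by (simp add: d_def)
  then have "a*a + b*c = 0 \<or> 2 * d < real_of_int (v (a*a + b*c))"
    by (simp only: det neg_equal_0_iff_equal v_uminus)
  from degenerate_std_depth_off_diagonal[OF t this]
  consider "b \<noteq> 0" "real_of_int (v b) + s = d" | "c \<noteq> 0" "real_of_int (v c) - s = d" by blast
  then show thesis
  proof cases
    case 1
    then have "Ad (matrix_inv h) \<Gamma> $1$2 \<noteq> 0"
      "real_of_int (v (Ad (matrix_inv h) \<Gamma> $1$2)) + s = depth_at v (h, s) \<Gamma>"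
      by (simp_all add: Y_def a_b_c_def d_def)
    from degenerate_point_upper_leading[OF G h lt this] that show thesis by blast
  next
    case 2
    note eq = same_point[OF MPd_weyl[OF h]]
    have hw: "h ** weyl \<in> SL2" using h weyl_SL2 by (rule SL2_mult)
    have "Ad (matrix_inv (h ** weyl)) \<Gamma> = M2 (-a) (-c) (-b) (- (-a))"
      using Ad_inv_weyl_M2[of a b c] by (simp add: Ad_inv_mult[OF h weyl_SL2] Y_def[symmetric] YE)
    then have "Ad (matrix_inv (h ** weyl)) \<Gamma> $1$2 \<noteq> 0"
      "real_of_int (v (Ad (matrix_inv (h ** weyl)) \<Gamma> $1$2)) + - s = depth_at v (h ** weyl, - s) \<Gamma>"
      using 2 by (simp_all add: v_uminus eq d_def)
    moreover have "ereal (depth_at v (h ** weyl, - s) \<Gamma>) < depth v \<Gamma>" using lt by (simp add: eq)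
    ultimately obtain N where "minorb v \<Gamma> (h ** weyl, - s) = orbit N"
      "N \<in> coset \<Gamma> (MPdE v (h ** weyl, - s) (depth v \<Gamma>))"
      "\<And>s0. \<exists>k\<in>SL2. ereal (depth_at v (k, s0) \<Gamma>) < depth v \<Gamma> \<and> minorb v \<Gamma> (k, s0) = orbit N"
      using degenerate_point_upper_leading[OF G hw] by metis
    then show thesis using that eq by simp
  qed
qed

end

section \<open>Nilpotent support\<close>

context odd_residual_valued_field
begin

lemma Nil_supp_meets_MPdE_coset:
  assumes G: "\<Gamma> \<in> sl2" "\<Gamma> \<noteq> 0" and Ob: "Ob \<in> Nil_supp v \<Gamma>"
  shows "\<exists>x\<in>BT. ereal (depth_at v x \<Gamma>) < depth v \<Gamma> \<and> Ob \<inter> coset \<Gamma> (MPdE v x (depth v \<Gamma>)) \<noteq> {}"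
proof -
  obtain h s where x: "h \<in> SL2" "ereal (depth_at v (h, s) \<Gamma>) < depth v \<Gamma>" "Ob = minorb v \<Gamma> (h, s)"
    using Ob by (auto simp: Nil_supp_def BT_def)
  obtain N where "minorb v \<Gamma> (h, s) = orbit N" "N \<in> coset \<Gamma> (MPdE v (h, s) (depth v \<Gamma>))"
    using degenerate_point[OF G x(1,2)] by metis
  then have "N \<in> Ob \<inter> coset \<Gamma> (MPdE v (h, s) (depth v \<Gamma>))" using x(3) mem_orbit_self by auto
  then show ?thesis using x by (auto simp: BT_def)
qed

lemma nil_orbit_meeting_MPdE_coset_in_Nil_supp:
  assumes G: "\<Gamma> \<in> sl2" "\<Gamma> \<noteq> 0" and x: "x \<in> BT" "ereal (depth_at v x \<Gamma>) < depth v \<Gamma>"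
    and Ob: "nil_orbit Ob" "Ob \<inter> coset \<Gamma> (MPdE v x (depth v \<Gamma>)) \<noteq> {}"
  shows "Ob \<in> Nil_supp v \<Gamma>"
proof -
  obtain h s where hs: "x = (h, s)" "h \<in> SL2" using x(1) by (auto simp: BT_def)
  from Ob obtain N0 M where N0: "N0 \<in> sl2" "nilpotent_mat N0" "Ob = orbit N0"
    and M: "M \<in> Ob" "M \<in> coset \<Gamma> (MPdE v x (depth v \<Gamma>))" by (auto simp: nil_orbit_def)
  from M(1) N0(3) obtain g where g: "g \<in> SL2" "M = Ad g N0" by (auto simp: orbit_def)
  have M_nil: "M \<in> sl2" "det M = 0"
    using g N0 nilpotent_mat_iff_det_eq_0[OF N0(1)] by (simp_all add: sl2_Ad_iff det_Ad)
  obtain t where t: "ereal t \<le> depth v \<Gamma>" "depth_at v x \<Gamma> < t"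
    using x(2) ereal_dense2 less_imp_le by (metis less_ereal.simps(1))
  have "Ad (matrix_inv h) (M - \<Gamma>) \<in> MP_std v s t"
    using M(2) t(1) unfolding mem_coset_iff hs(1) mem_MPdE_iff[OF hs(2)] by blast
  then have "M \<in> coset \<Gamma> (MPd_plus v (h, s) (depth_at v (h, s) \<Gamma>))"
    using t(2) unfolding mem_coset_iff mem_MPd_plus_iff[OF hs(2)] UN_MP_std_eq_MP_std_plus[symmetric] hs(1)
    by blast
  then have "minorb v \<Gamma> (h, s) = orbit M" by (rule minorb_eq_orbit[OF hs(2) G M_nil])
  moreover have "orbit M = Ob" using g N0 orbit_Ad by simp
  ultimately show ?thesis using x unfolding Nil_supp_def hs(1) by auto
qed

lemma Nil_supp_eq_conjugates:
  assumes G: "\<Gamma> \<in> sl2" "\<Gamma> \<noteq> 0" and x: "x \<in> BT"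
  shows "Nil_supp v \<Gamma> = {minorb v (Ad g \<Gamma>) x | g. g \<in> SL2 \<and> ereal (depth_at v x (Ad g \<Gamma>)) < depth v \<Gamma>}"
proof -
  obtain h0 s0 where x0: "x = (h0, s0)" "h0 \<in> SL2" using x by (auto simp: BT_def)
  show ?thesis
  proof safe
    fix Ob assume "Ob \<in> Nil_supp v \<Gamma>"
    then obtain h s where y: "h \<in> SL2" "ereal (depth_at v (h, s) \<Gamma>) < depth v \<Gamma>" "Ob = minorb v \<Gamma> (h, s)"
      by (auto simp: Nil_supp_def BT_def)
    obtain N k where N: "minorb v \<Gamma> (h, s) = orbit N"
      and k: "k \<in> SL2" "ereal (depth_at v (k, s0) \<Gamma>) < depth v \<Gamma>" "minorb v \<Gamma> (k, s0) = orbit N"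
      using degenerate_point[OF G y(1,2)] by metis
    define g where "g = h0 ** matrix_inv k"
    have g: "g \<in> SL2" using x0(2) k(1) by (simp add: g_def SL2_mult SL2_matrix_inv)
    have x': "x = (g ** k, s0)"
      using SL2_inverse_mult[OF k(1)] x0(1) by (simp add: g_def matrix_mul_assoc[symmetric] matrix_mul_rid)
    have "Ob = minorb v (Ad g \<Gamma>) x" "ereal (depth_at v x (Ad g \<Gamma>)) < depth v \<Gamma>"
      using k N y(3) unfolding x' minorb_Ad[OF g k(1)] depth_at_Ad[OF g k(1)] by simp_all
    then show "\<exists>g. Ob = minorb v (Ad g \<Gamma>) x \<and> g \<in> SL2 \<and> ereal (depth_at v x (Ad g \<Gamma>)) < depth v \<Gamma>"
      using g by blast
  next
    fix g assume g: "g \<in> SL2" "ereal (depth_at v x (Ad g \<Gamma>)) < depth v \<Gamma>"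
    define k where "k = matrix_inv g ** h0"
    have k: "k \<in> SL2" using g(1) x0(2) by (simp add: k_def SL2_mult SL2_matrix_inv)
    have x': "x = (g ** k, s0)"
      using SL2_inverse_mult[OF g(1)] x0(1) by (simp add: k_def matrix_mul_assoc matrix_mul_lid)
    show "minorb v (Ad g \<Gamma>) x \<in> Nil_supp v \<Gamma>"
      using g k unfolding Nil_supp_def x' minorb_Ad[OF g(1) k] depth_at_Ad[OF g(1) k]
      by (auto simp: BT_def)
  qed
qed

end

lemma valued_field_of_nonarch_local_field:
  assumes "nonarch_local_field v p"
  shows "valued_field v"
  using assms unfolding nonarch_local_field_def by unfold_locales blast+

lemma odd_residual_valued_field_of_nonarch_local_field:
  assumes F: "nonarch_local_field v p" and p: "p \<ge> 3"
  shows "odd_residual_valued_field v"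
proof -
  interpret valued_field v using valued_field_of_nonarch_local_field[OF F] .
  have "odd p" using F p by (intro prime_odd_nat) (auto simp: nonarch_local_field_def)
  moreover have "vge v (of_nat p) 1" using F by (simp add: nonarch_local_field_def)
  ultimately show ?thesis using two_unit_if_odd_nonunit by unfold_locales
qed

theorem mainTheorem3:
  fixes v :: "'a::field \<Rightarrow> int" and p :: nat and \<Gamma> :: "'a mat2"
  assumes F: "nonarch_local_field v p" and p3: "p \<ge> 3"
    and \<Gamma>: "\<Gamma> \<in> sl2" "\<Gamma> \<noteq> 0"
  defines "r \<equiv> depth v \<Gamma>"
  shows "(\<forall>Ob \<in> Nil_supp v \<Gamma>. \<exists>x\<in>BT. ereal (depth_at v x \<Gamma>) < r \<and>
                           Ob \<inter> coset \<Gamma> (MPdE v x r) \<noteq> {})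
       \<and> (\<forall>x\<in>BT. ereal (depth_at v x \<Gamma>) < r \<longrightarrow>
            (\<forall>Ob. nil_orbit Ob \<and> Ob \<inter> coset \<Gamma> (MPdE v x r) \<noteq> {} \<longrightarrow> Ob \<in> Nil_supp v \<Gamma>))
       \<and> (\<forall>x\<in>BT. Nil_supp v \<Gamma> = {minorb v (Ad g \<Gamma>) x | g. g \<in> SL2 \<and>
                                  ereal (depth_at v x (Ad g \<Gamma>)) < depth v \<Gamma>}
                  \<and> Nil_supp v \<Gamma> = Nil_at v \<Gamma> x)"
proof -
  interpret odd_residual_valued_field v
    using odd_residual_valued_field_of_nonarch_local_field[OF F p3] .
  show ?thesis
    using Nil_supp_meets_MPdE_coset[OF \<Gamma>] nil_orbit_meeting_MPdE_coset_in_Nil_supp[OF \<Gamma>]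
      Nil_supp_eq_conjugates[OF \<Gamma>]
    unfolding r_def Nil_at_def by blast
qed

end
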